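(* There exist $\mathfrak{c}$ pairwise non-homeomorphic topologies $\tau\in\mathcal{L}$ such that $(\mathbb{R},\tau)$ is completely metrizable.
   Context: $\mathfrak{c}=|\mathbb{R}|$. $\eta$ denotes the Euclidean topology on $\mathbb{R}$. $\mathcal{L}$ denotes the family of all Hausdorff topologies $\tau$ on the set $\mathbb{R}$ with $\tau\subset\eta$. *)

theory Defs
  imports "HOL-Analysis.Analysis" "HOL-Library.Equipollence"
begin

definition coarser_Hausdorff_topologies :: "real topology set" where
  "coarser_Hausdorff_topologies =
     {T. topspace T = UNIV \<and> Hausdorff_space T \<and>
         (\<forall>U. openin T U \<longrightarrow> open U)}"

end

theory Submission
  imports Defs
begin

text \<open>For \<open>A \<subseteq> \<nat>\<close> let \<open>blocks A\<close> be the union of the blocks \<open>[3i+3, 3i+4]\<close>, \<open>i \<in> A\<close>, and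
  \<open>{3i+3}\<close>, \<open>i \<notin> A\<close>.  The line is embedded as a closed subset of the Banach space
  \<open>\<real> \<times> C\<^sub>b(\<real>)\<close>: the half-line \<open>[0, \<infinity>)\<close> isometrically onto \<open>[0, \<infinity>) \<times> {0}\<close>, and \<open>(-\<infinity>, 0]\<close>
  as a path whose first coordinate passes, at its \<open>n\<close>-th dip, the \<open>n\<close>-th term of a sequence
  returning arbitrarily close to every point of \<open>blocks A\<close>, while in its second coordinate the
  \<open>n\<close>-th component is a spike supported near the \<open>n\<close>-th dip, of height \<open>1/(n+1)\<close> there.  The topology \<open>tau A\<close> pulled back along
  this embedding is coarser than the Euclidean one, Hausdorff and completely metrizable.

  Its points of non-local compactness are exactly \<open>blocks A\<close>: raising the dips near a block point
  to a common spike height yields infinite uniformly separated sets in each of its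
  neighbourhoods, while off the blocks the embedding has a continuous inverse.  Since \<open>tau A\<close> is
  Euclidean on \<open>blocks A\<close> and on its complement, a homeomorphism \<open>tau A \<cong> tau B\<close> permutes the
  blocks and preserves the relation of being joined by a connected set of locally compact
  points.  That relation is the path graph on \<open>\<nat>\<close>, which has no nontrivial automorphism, so
  block \<open>i\<close> goes to block \<open>i\<close>; as block \<open>i\<close> is a point exactly when \<open>i \<notin> A\<close>, we get \<open>A = B\<close>.
  Dedekind cuts of the rationals provide continuum many sets \<open>A\<close>.\<close>

section \<open>Non-locally-compact points and their adjacency\<close>

definition locally_compact_at :: "'a topology \<Rightarrow> 'a \<Rightarrow> bool" where
  "locally_compact_at X x \<longleftrightarrow> (\<exists>U K. openin X U \<and> compactin X K \<and> x \<in> U \<and> U \<subseteq> K)"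

definition non_locally_compact_points :: "'a topology \<Rightarrow> 'a set" where
  "non_locally_compact_points X = {x \<in> topspace X. \<not> locally_compact_at X x}"

lemma homeomorphic_map_locally_compact_at:
  assumes f: "homeomorphic_map X Y f" and x: "locally_compact_at X x"
  shows "locally_compact_at Y (f x)"
proof -
  obtain U K where UK: "openin X U" "compactin X K" "x \<in> U" "U \<subseteq> K"
    using x unfolding locally_compact_at_def by blast
  have "openin Y (f ` U)"
    using homeomorphic_imp_open_map[OF f] UK(1) unfolding open_map_def by blast
  moreover have "compactin Y (f ` K)"
    using image_compactin[OF UK(2) homeomorphic_imp_continuous_map[OF f]] .
  ultimately show ?thesis
    using UK unfolding locally_compact_at_def by blast
qed

lemma homeomorphic_map_locally_compact_at_iff:
  assumes f: "homeomorphic_map X Y f" and x: "x \<in> topspace X"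
  shows "locally_compact_at Y (f x) \<longleftrightarrow> locally_compact_at X x"
proof
  obtain g where "homeomorphic_maps X Y f g"
    using f homeomorphic_map_maps by blast
  then have g: "homeomorphic_map Y X g" "g (f x) = x"
    using x unfolding homeomorphic_maps_map by auto
  assume "locally_compact_at Y (f x)"
  from homeomorphic_map_locally_compact_at[OF g(1) this] show "locally_compact_at X x"
    unfolding g(2) .
qed (rule homeomorphic_map_locally_compact_at[OF f])

lemma homeomorphic_map_non_locally_compact_points:
  assumes f: "homeomorphic_map X Y f"
  shows "f ` non_locally_compact_points X = non_locally_compact_points Y"
proof -
  have "f ` non_locally_compact_points X = {y \<in> f ` topspace X. \<not> locally_compact_at Y y}"
    unfolding non_locally_compact_points_def
    using homeomorphic_map_locally_compact_at_iff[OF f] by auto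
  then show ?thesis
    unfolding non_locally_compact_points_def homeomorphic_imp_surjective_map[OF f] .
qed

lemma homeomorphic_map_non_locally_compact_components:
  assumes f: "homeomorphic_map X Y f"
  shows "connected_components_of (subtopology Y (non_locally_compact_points Y)) =
           image f ` connected_components_of (subtopology X (non_locally_compact_points X))"
proof -
  have "f ` (topspace X \<inter> non_locally_compact_points X) = topspace Y \<inter> non_locally_compact_points Y"
    using homeomorphic_map_non_locally_compact_points[OF f]
    by (auto simp: non_locally_compact_points_def)
  then show ?thesis
    by (intro homeomorphic_map_connected_components_of homeomorphic_map_subtopologies[OF f])
qed

definition adjacent_in :: "'a topology \<Rightarrow> 'a set \<Rightarrow> 'a set \<Rightarrow> bool" where
  "adjacent_in X P Q \<longleftrightarrow> P \<noteq> Q \<and>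
     (\<exists>S. connectedin X S \<and> S \<inter> non_locally_compact_points X = {} \<and>
          X closure_of S \<inter> non_locally_compact_points X \<subseteq> P \<union> Q \<and>
          X closure_of S \<inter> P \<noteq> {} \<and> X closure_of S \<inter> Q \<noteq> {})"

lemma adjacent_in_sym: "adjacent_in X P Q \<Longrightarrow> adjacent_in X Q P"
  unfolding adjacent_in_def by blast

lemma homeomorphic_map_adjacent_in:
  assumes f: "homeomorphic_map X Y f" and PQ: "P \<subseteq> topspace X" "Q \<subseteq> topspace X"
    and adj: "adjacent_in X P Q"
  shows "adjacent_in Y (f ` P) (f ` Q)"
proof -
  let ?N = "non_locally_compact_points"
  obtain S where S: "connectedin X S" "S \<inter> ?N X = {}" "X closure_of S \<inter> ?N X \<subseteq> P \<union> Q"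
    "X closure_of S \<inter> P \<noteq> {}" "X closure_of S \<inter> Q \<noteq> {}" and "P \<noteq> Q"
    using adj unfolding adjacent_in_def by blast
  have inj: "inj_on f (topspace X)"
    by (rule homeomorphic_imp_injective_map[OF f])
  have St: "S \<subseteq> topspace X"
    by (rule connectedin_subset_topspace[OF S(1)])
  have Nt: "?N X \<subseteq> topspace X"
    by (auto simp: non_locally_compact_points_def)
  have cl: "Y closure_of (f ` S) = f ` (X closure_of S)"
    by (rule homeomorphic_map_closure_of[OF f St])
  have N: "?N Y = f ` ?N X"
    using homeomorphic_map_non_locally_compact_points[OF f] by simp
  have "f ` P \<noteq> f ` Q"
    using \<open>P \<noteq> Q\<close> inj_on_image_eq_iff[OF inj PQ] by simp
  moreover have "connectedin Y (f ` S)"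
    by (rule connectedin_continuous_map_image[OF homeomorphic_imp_continuous_map[OF f] S(1)])
  moreover have "f ` S \<inter> ?N Y = {}"
    unfolding N using inj_on_image_Int[OF inj St Nt] S(2) by simp
  moreover have "Y closure_of (f ` S) \<inter> ?N Y \<subseteq> f ` P \<union> f ` Q"
    unfolding cl N using inj_on_image_Int[OF inj closure_of_subset_topspace Nt] S(3) by blast
  moreover have "Y closure_of (f ` S) \<inter> f ` P \<noteq> {}" "Y closure_of (f ` S) \<inter> f ` Q \<noteq> {}"
    unfolding cl using S(4,5) by blast+
  ultimately show ?thesis
    unfolding adjacent_in_def by blast
qed

lemma homeomorphic_map_adjacent_in_iff:
  assumes f: "homeomorphic_map X Y f" and PQ: "P \<subseteq> topspace X" "Q \<subseteq> topspace X"
  shows "adjacent_in Y (f ` P) (f ` Q) \<longleftrightarrow> adjacent_in X P Q"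
proof
  obtain g where "homeomorphic_maps X Y f g"
    using f homeomorphic_map_maps by blast
  then have g: "homeomorphic_map Y X g" "\<And>x. x \<in> topspace X \<Longrightarrow> g (f x) = x"
    unfolding homeomorphic_maps_map by auto
  have fPQ: "f ` P \<subseteq> topspace Y" "f ` Q \<subseteq> topspace Y"
    using PQ homeomorphic_imp_surjective_map[OF f] by auto
  have "g ` f ` P = P" "g ` f ` Q = Q"
    using PQ g(2) by (force simp: image_image)+
  moreover assume "adjacent_in Y (f ` P) (f ` Q)"
  ultimately show "adjacent_in X P Q"
    using homeomorphic_map_adjacent_in[OF g(1) fPQ] by metis
qed (rule homeomorphic_map_adjacent_in[OF f PQ])

text \<open>\<open>0\<close> is the only vertex of the path graph on \<open>\<nat>\<close> with a single neighbour, so an automorphism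
  fixes it, and then every vertex by induction.\<close>

lemma path_graph_automorphism_eq_id:
  fixes \<sigma> :: "nat \<Rightarrow> nat"
  assumes "bij \<sigma>"
    and adj: "\<And>i j. (\<sigma> j = Suc (\<sigma> i) \<or> \<sigma> i = Suc (\<sigma> j)) \<longleftrightarrow> (j = Suc i \<or> i = Suc j)"
  shows "\<sigma> i = i"
proof -
  have inv: "\<sigma> (inv \<sigma> j) = j" for j
    using \<open>bij \<sigma>\<close> by (simp add: bij_is_surj surj_f_inv_f)
  have inj: "inj \<sigma>"
    using \<open>bij \<sigma>\<close> by (rule bij_is_inj)
  have zero: "\<sigma> 0 = 0"
  proof (rule ccontr)
    assume "\<sigma> 0 \<noteq> 0"
    then obtain j where j: "\<sigma> 0 = Suc j"
      using not0_implies_Suc by blast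
    have "inv \<sigma> j = 1" "inv \<sigma> (Suc (Suc j)) = 1"
      using adj[of "inv \<sigma> j" 0] adj[of "inv \<sigma> (Suc (Suc j))" 0] by (simp_all add: inv j)
    then have "j = Suc (Suc j)"
      by (metis inv)
    then show False
      by simp
  qed
  have "\<sigma> i = i \<and> \<sigma> (Suc i) = Suc i"
  proof (induction i)
    case 0
    then show ?case
      using adj[of 0 1] zero by simp
  next
    case (Suc i)
    have "\<sigma> (Suc (Suc i)) \<noteq> \<sigma> i"
      using inj by (simp add: inj_eq)
    then have "\<sigma> (Suc (Suc i)) = Suc (Suc i)"
      using adj[of "Suc i" "Suc (Suc i)"] Suc by auto
    with Suc show ?case
      by simp
  qed
  then show ?thesis
    by simp
qed

lemma dist_Pair_le_add: "dist (a, b) (c, d) \<le> dist a c + dist b d"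
  unfolding dist_Pair_Pair using sqrt_sum_squares_le_sum[of "dist a c" "dist b d"] by simp

lemma abs_apply_snd_diff_le_dist:
  fixes x y :: "'a::metric_space \<times> ('b::topological_space \<Rightarrow>\<^sub>C real)"
  shows "\<bar>apply_bcontfun (snd x) p - apply_bcontfun (snd y) p\<bar> \<le> dist x y"
  using dist_bounded[of "snd x" p "snd y"] dist_snd_le[of x y] by (simp add: dist_real_def)

lemma abs_fst_diff_le_dist:
  fixes x y :: "real \<times> 'a::metric_space"
  shows "\<bar>fst x - fst y\<bar> \<le> dist x y"
  using dist_fst_le[of x y] by (simp add: dist_real_def)

lemma finite_if_separated_in_compact:
  fixes P :: "'a::metric_space set"
  assumes "compact K" "P \<subseteq> K" "0 < e"
    and sep: "\<And>x y. x \<in> P \<Longrightarrow> y \<in> P \<Longrightarrow> x \<noteq> y \<Longrightarrow> e \<le> dist x y"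
  shows "finite P"
proof (rule ccontr)
  assume "infinite P"
  then obtain x where x: "x islimpt P"
    using Heine_Borel_imp_Bolzano_Weierstrass[OF assms(1) _ assms(2)] by auto
  have "e/2 > 0"
    using \<open>0 < e\<close> by simp
  then obtain y where y: "y \<in> P" "y \<noteq> x" "dist y x < e/2"
    using x[unfolded islimpt_approachable] by blast
  have "dist y x > 0"
    using y(2) by simp
  then obtain z where z: "z \<in> P" "z \<noteq> x" "dist z x < dist y x"
    using x[unfolded islimpt_approachable] by blast
  then have "e \<le> dist y z"
    using y by (intro sep) auto
  then show False
    using dist_triangle2[of y z x] y(3) z(3) by linarith
qed

lemma in_image_if_closure_range_localized:
  fixes f :: "'a::topological_space \<Rightarrow> 'b::metric_space"
  assumes "continuous_on K f" "compact K" "z \<in> closure (range f)" "0 < e"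
    and near: "\<And>t. dist z (f t) < e \<Longrightarrow> t \<in> K"
  shows "z \<in> f ` K"
proof -
  have "z \<in> closure (f ` K)"
    unfolding closure_approachable
  proof (intro allI impI)
    fix d :: real assume "0 < d"
    then obtain t where "dist (f t) z < min d e"
      using assms(3,4) unfolding closure_approachable by (metis min_less_iff_conj rangeE)
    then show "\<exists>w\<in>f ` K. dist w z < d"
      using near[of t] by (auto simp: dist_commute)
  qed
  moreover have "closed (f ` K)"
    by (intro compact_imp_closed compact_continuous_image assms(1,2))
  ultimately show ?thesis
    by (simp add: closure_closed)
qed

section \<open>Topologies pulled back along injections into metric spaces\<close>

lemma openin_pullback_euclidean:
  "openin (pullback_topology UNIV f euclidean) U \<longleftrightarrow> (\<exists>V. open V \<and> U = f -` V)"
  by (simp add: openin_pullback_topology)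

lemma topspace_pullback_euclidean [simp]: "topspace (pullback_topology UNIV f euclidean) = UNIV"
  by (simp add: topspace_pullback_topology)

lemma continuous_map_pullback_euclidean:
  "continuous_map (pullback_topology UNIV f euclidean) euclidean f"
  using continuous_map_pullback[OF continuous_map_id, of UNIV f] by simp

lemma openin_pullback_imp_open:
  assumes "continuous_on UNIV f" "openin (pullback_topology UNIV f euclidean) U"
  shows "open U"
  using assms open_vimage by (auto simp: openin_pullback_euclidean)

lemma continuous_map_id_pullback:
  assumes "continuous_on UNIV f"
  shows "continuous_map euclidean (pullback_topology UNIV f euclidean) id"
  using openin_pullback_imp_open[OF assms] by (auto simp: continuous_map_def)

lemma compactin_pullback:
  assumes "continuous_on UNIV f" "compact S"
  shows "compactin (pullback_topology UNIV f euclidean) S"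
  using image_compactin[OF _ continuous_map_id_pullback[OF assms(1)], of S] assms(2)
  by (simp add: compactin_euclidean_iff)

lemma closure_subset_closure_of_pullback:
  assumes "continuous_on UNIV f"
  shows "closure S \<subseteq> pullback_topology UNIV f euclidean closure_of S"
  using continuous_map_image_closure_subset[OF continuous_map_id_pullback[OF assms], of S]
  by (simp add: euclidean_closure_of)

lemma homeomorphic_map_pullback_range:
  assumes "inj f"
  shows "homeomorphic_map (pullback_topology UNIV f euclidean) (top_of_set (range f)) f"
proof (rule bijective_open_imp_homeomorphic_map)
  show "continuous_map (pullback_topology UNIV f euclidean) (top_of_set (range f)) f"
    using continuous_map_pullback_euclidean by (simp add: continuous_map_in_subtopology)
  show "open_map (pullback_topology UNIV f euclidean) (top_of_set (range f)) f"
    unfolding open_map_def openin_pullback_euclidean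
    by (auto simp: openin_subtopology_alt)
qed (use assms in auto)

lemma pullback_homeomorphic_space_range:
  assumes "inj f"
  shows "pullback_topology UNIV f euclidean homeomorphic_space top_of_set (range f)"
  unfolding homeomorphic_space using homeomorphic_map_pullback_range[OF assms] by blast

lemma Hausdorff_space_pullback:
  fixes f :: "'a \<Rightarrow> 'b::metric_space"
  assumes "inj f"
  shows "Hausdorff_space (pullback_topology UNIV f euclidean)"
  using homeomorphic_Hausdorff_space[OF pullback_homeomorphic_space_range[OF assms]]
  by (simp add: Hausdorff_space_subtopology Hausdorff_space_euclidean)

lemma completely_metrizable_space_pullback:
  fixes f :: "'a \<Rightarrow> 'b::complete_space"
  assumes "inj f" "closed (range f)"
  shows "completely_metrizable_space (pullback_topology UNIV f euclidean)"
proof -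
  have "completely_metrizable_space (top_of_set (range f))"
    using completely_metrizable_space_closedin[OF completely_metrizable_space_euclidean] assms(2)
    by simp
  then show ?thesis
    using homeomorphic_completely_metrizable_space[OF pullback_homeomorphic_space_range[OF assms(1)]]
    by simp
qed

lemma closure_of_pullback_subset:
  fixes f :: "'a::topological_space \<Rightarrow> 'b::metric_space"
  assumes "continuous_on UNIV f" "inj f" "compact K" "S \<subseteq> K"
  shows "pullback_topology UNIV f euclidean closure_of S \<subseteq> K"
  by (intro closure_of_minimal assms(4) compactin_imp_closedin Hausdorff_space_pullback
      compactin_pullback assms(1-3))

lemma openin_pullback_preimage_ball:
  "openin (pullback_topology UNIV f euclidean) {s. dist (f s) y < r}"
  unfolding openin_pullback_euclidean
  by (rule exI[of _ "ball y r"]) (auto simp: dist_commute)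

lemma openin_pullback_contains_preimage_ball:
  assumes "openin (pullback_topology UNIV f euclidean) U" "p \<in> U"
  obtains r where "0 < r" "\<And>s. dist (f s) (f p) < r \<Longrightarrow> s \<in> U"
proof -
  obtain V where V: "open V" "U = f -` V"
    using assms(1) by (auto simp: openin_pullback_euclidean)
  then obtain r where r: "0 < r" "ball (f p) r \<subseteq> V"
    using assms(2) open_contains_ball by blast
  show ?thesis
  proof (rule that[OF r(1)])
    fix s assume "dist (f s) (f p) < r"
    then show "s \<in> U"
      using r(2) V(2) by (auto simp: dist_commute)
  qed
qed

definition inverse_continuous_at :: "('a::metric_space \<Rightarrow> 'b::metric_space) \<Rightarrow> 'a set \<Rightarrow> 'a \<Rightarrow> bool"
  where "inverse_continuous_at f S t \<longleftrightarrow>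
           (\<forall>e>0. \<exists>r>0. \<forall>s\<in>S. dist (f s) (f t) < r \<longrightarrow> dist s t < e)"

lemma inverse_continuous_at_subset:
  "inverse_continuous_at f T t \<Longrightarrow> S \<subseteq> T \<Longrightarrow> inverse_continuous_at f S t"
  unfolding inverse_continuous_at_def by blast

lemma subtopology_pullback_eq_top_of_set:
  assumes cont: "continuous_on UNIV f" and inv: "\<And>t. t \<in> S \<Longrightarrow> inverse_continuous_at f S t"
  shows "subtopology (pullback_topology UNIV f euclidean) S = top_of_set S"
  unfolding topology_eq
proof (intro allI iffI)
  fix W
  assume "openin (subtopology (pullback_topology UNIV f euclidean) S) W"
  then show "openin (top_of_set S) W"
    using openin_pullback_imp_open[OF cont] by (auto simp: openin_subtopology)
next
  fix W
  assume "openin (top_of_set S) W"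
  then obtain V where V: "open V" "W = V \<inter> S"
    by (auto simp: openin_open)
  show "openin (subtopology (pullback_topology UNIV f euclidean) S) W"
    unfolding openin_subopen[of _ W]
  proof
    fix w assume w: "w \<in> W"
    then obtain e where e: "0 < e" "ball w e \<subseteq> V"
      using V open_contains_ball by blast
    obtain r where r: "0 < r" "\<And>s. s \<in> S \<Longrightarrow> dist (f s) (f w) < r \<Longrightarrow> dist s w < e"
      using inv[of w] w V(2) e(1) unfolding inverse_continuous_at_def by blast
    let ?B = "{s. dist (f s) (f w) < r} \<inter> S"
    have "openin (subtopology (pullback_topology UNIV f euclidean) S) ?B"
      by (rule openin_subtopology_Int[OF openin_pullback_preimage_ball])
    moreover have "?B \<subseteq> W"
      using r(2) e(2) V(2) by (force simp: dist_commute)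
    ultimately show "\<exists>B. openin (subtopology (pullback_topology UNIV f euclidean) S) B \<and> w \<in> B \<and> B \<subseteq> W"
      using w V(2) r(1) by auto
  qed
qed

lemma inverse_continuous_at_if_far_outside_compact:
  fixes f :: "'a::metric_space \<Rightarrow> 'b::metric_space"
  assumes cont: "continuous_on UNIV f" and "inj f" "compact K" "0 < \<rho>"
    and far: "\<And>s. s \<notin> K \<Longrightarrow> \<rho> \<le> dist (f s) (f t)"
  shows "inverse_continuous_at f UNIV t"
  unfolding inverse_continuous_at_def
proof (intro allI impI)
  fix e :: real assume "0 < e"
  define C where "C = K - ball t e"
  have "compact C"
    unfolding C_def using \<open>compact K\<close> by (intro compact_diff) auto
  obtain r where r: "0 < r" "\<And>s. s \<in> C \<Longrightarrow> r \<le> dist (f s) (f t)"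
  proof (cases "C = {}")
    case False
    have "continuous_on C (\<lambda>s. dist (f s) (f t))"
      by (intro continuous_intros continuous_on_subset[OF cont]) auto
    then obtain s0 where s0: "s0 \<in> C" "\<And>s. s \<in> C \<Longrightarrow> dist (f s0) (f t) \<le> dist (f s) (f t)"
      using continuous_attains_inf[OF \<open>compact C\<close> False] by blast
    have "s0 \<noteq> t"
      using s0(1) \<open>0 < e\<close> by (auto simp: C_def)
    then have "0 < dist (f s0) (f t)"
      using \<open>inj f\<close> by (simp add: inj_eq)
    then show ?thesis
      using that s0(2) by blast
  qed (use that[of 1] in simp)
  show "\<exists>r>0. \<forall>s\<in>UNIV. dist (f s) (f t) < r \<longrightarrow> dist s t < e"
  proof (intro exI[of _ "min \<rho> r"] conjI ballI impI)
    fix s assume "dist (f s) (f t) < min \<rho> r"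
    then have "s \<in> K" "s \<notin> C"
      using far r(2) by force+
    then show "dist s t < e"
      by (simp add: C_def dist_commute)
  qed (use \<open>0 < \<rho>\<close> r(1) in simp)
qed

lemma locally_compact_at_pullback:
  fixes f :: "'a::heine_borel \<Rightarrow> 'b::metric_space"
  assumes cont: "continuous_on UNIV f" and inv: "inverse_continuous_at f UNIV t"
  shows "locally_compact_at (pullback_topology UNIV f euclidean) t"
proof -
  obtain r where r: "0 < r" "\<And>s. dist (f s) (f t) < r \<Longrightarrow> dist s t < 1"
    using inv[unfolded inverse_continuous_at_def, rule_format, OF zero_less_one] by auto
  have "{s. dist (f s) (f t) < r} \<subseteq> cball t 1"
    using r(2) by (force simp: dist_commute)
  moreover have "t \<in> {s. dist (f s) (f t) < r}"
    using r(1) by simp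
  ultimately show ?thesis
    unfolding locally_compact_at_def
    using openin_pullback_preimage_ball[of f "f t" r] compactin_pullback[OF cont compact_cball, of t 1]
    by blast
qed

lemma not_locally_compact_at_pullback:
  fixes f :: "'a \<Rightarrow> 'b::metric_space"
  assumes "\<And>r. 0 < r \<Longrightarrow> \<exists>I :: nat set. \<exists>p e. infinite I \<and> 0 < e \<and>
             (\<forall>m\<in>I. dist (f (p m)) (f t) < r) \<and>
             (\<forall>m\<in>I. \<forall>m'\<in>I. m \<noteq> m' \<longrightarrow> e \<le> dist (f (p m)) (f (p m')))"
  shows "\<not> locally_compact_at (pullback_topology UNIV f euclidean) t"
proof
  assume "locally_compact_at (pullback_topology UNIV f euclidean) t"
  then obtain U K where UK: "openin (pullback_topology UNIV f euclidean) U"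
      "compactin (pullback_topology UNIV f euclidean) K" "t \<in> U" "U \<subseteq> K"
    unfolding locally_compact_at_def by blast
  obtain r where r: "0 < r" "\<And>s. dist (f s) (f t) < r \<Longrightarrow> s \<in> U"
    using openin_pullback_contains_preimage_ball[OF UK(1,3)] by metis
  obtain I :: "nat set" and p e where I: "infinite I" "0 < e" "\<And>m. m \<in> I \<Longrightarrow> dist (f (p m)) (f t) < r"
      and sep: "\<And>m m'. m \<in> I \<Longrightarrow> m' \<in> I \<Longrightarrow> m \<noteq> m' \<Longrightarrow> e \<le> dist (f (p m)) (f (p m'))"
    using assms[OF r(1)] by metis
  have inj: "inj_on (f \<circ> p) I"
  proof (rule inj_onI, rule ccontr)
    fix m m' assume "m \<in> I" "m' \<in> I" "(f \<circ> p) m = (f \<circ> p) m'" "m \<noteq> m'"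
    then show False
      using sep[of m m'] \<open>0 < e\<close> by simp
  qed
  have "compact (f ` K)"
    using image_compactin[OF UK(2) continuous_map_pullback_euclidean] by simp
  moreover have "(f \<circ> p) ` I \<subseteq> f ` K"
    using I(3) r(2) UK(4) by auto
  moreover have "e \<le> dist y y'" if "y \<in> (f \<circ> p) ` I" "y' \<in> (f \<circ> p) ` I" "y \<noteq> y'" for y y'
    using that sep by auto
  ultimately have "finite ((f \<circ> p) ` I)"
    by (rule finite_if_separated_in_compact[OF _ _ \<open>0 < e\<close>])
  then show False
    using I(1) finite_image_iff[OF inj] by simp
qed

section \<open>Recurrent dense sequences, interpolation and spikes\<close>

lemma recurrent_dense_sequence_exists:
  fixes S :: "'a::{metric_space, second_countable_topology} set"
  assumes "S \<noteq> {}"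
  shows "\<exists>c :: nat \<Rightarrow> 'a. range c \<subseteq> S \<and> (\<forall>k\<in>S. \<forall>r>0. \<forall>M. \<exists>m\<ge>M. dist (c m) k < r)"
proof -
  obtain T where T: "countable T" "T \<subseteq> S" "S \<subseteq> closure T"
    using separable by blast
  have "T \<noteq> {}"
    using T(3) assms by auto
  define c where "c m = from_nat_into T (fst (prod_decode m))" for m
  have "range c \<subseteq> S"
    using T(2) from_nat_into[OF \<open>T \<noteq> {}\<close>] by (auto simp: c_def)
  moreover have "\<exists>m\<ge>M. dist (c m) k < r" if k: "k \<in> S" "0 < r" for k r M
  proof -
    obtain x where x: "x \<in> T" "dist x k < r"
      using k T(3) closure_approachable by blast
    define m where "m = prod_encode (to_nat_on T x, M)"
    have "c m = x"
      using x(1) T(1) by (simp add: c_def m_def)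
    moreover have "M \<le> m"
      unfolding m_def by (rule le_prod_encode_2)
    ultimately show ?thesis
      using x(2) by blast
  qed
  ultimately show ?thesis
    by blast
qed

definition lin_interp :: "(nat \<Rightarrow> real) \<Rightarrow> real \<Rightarrow> real" where
  "lin_interp y u = y (nat \<lfloor>u\<rfloor>) + frac u * (y (Suc (nat \<lfloor>u\<rfloor>)) - y (nat \<lfloor>u\<rfloor>))"

lemma lin_interp_eq:
  assumes "real k \<le> u" "u \<le> real k + 1"
  shows "lin_interp y u = y k + (u - real k) * (y (Suc k) - y k)"
proof (cases "u < real k + 1")
  case True
  then have "\<lfloor>u\<rfloor> = int k"
    using assms by linarith
  then show ?thesis
    by (simp add: lin_interp_def frac_def)
next
  case False
  then have u: "u = of_nat (Suc k)"
    using assms by simp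
  have "frac u = 0"
    unfolding u by (simp only: frac_eq_0_iff Ints_of_nat)
  then show ?thesis
    unfolding lin_interp_def u floor_of_nat nat_int by simp
qed

lemma lin_interp_0 [simp]: "lin_interp y 0 = y 0"
  by (simp add: lin_interp_def)

lemma lin_interp_nonneg:
  assumes "\<And>k. 0 \<le> y k" "0 \<le> u"
  shows "0 \<le> lin_interp y u"
proof -
  define k where "k = nat \<lfloor>u\<rfloor>"
  have k: "real k \<le> u" "u \<le> real k + 1"
    using assms(2) unfolding k_def by linarith+
  have "lin_interp y u = (1 - (u - real k)) * y k + (u - real k) * y (Suc k)"
    using lin_interp_eq[OF k] by (simp add: algebra_simps)
  also have "\<dots> \<ge> 0"
    using k assms(1) by (intro add_nonneg_nonneg mult_nonneg_nonneg) auto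
  finally show ?thesis .
qed

lemma lin_interp_of_nat: "lin_interp y (real n) = y n"
  using lin_interp_eq[of n "real n" y] by simp

lemma lin_interp_diff: "lin_interp a u - lin_interp b u = lin_interp (\<lambda>k. a k - b k) u"
  by (simp add: lin_interp_def algebra_simps)

lemma abs_lin_interp_le:
  assumes "\<And>k. \<bar>y k\<bar> \<le> B" "0 \<le> u"
  shows "\<bar>lin_interp y u\<bar> \<le> B"
proof -
  define k where "k = nat \<lfloor>u\<rfloor>"
  have k: "real k \<le> u" "u \<le> real k + 1"
    using assms(2) unfolding k_def by linarith+
  have "lin_interp y u = (1 - (u - real k)) * y k + (u - real k) * y (Suc k)"
    using lin_interp_eq[OF k, of y] by (simp add: algebra_simps)
  then have "\<bar>lin_interp y u\<bar> = \<bar>(1 - (u - real k)) * y k + (u - real k) * y (Suc k)\<bar>"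
    by simp
  also have "\<dots> \<le> (1 - (u - real k)) * \<bar>y k\<bar> + (u - real k) * \<bar>y (Suc k)\<bar>"
    using k by (simp add: abs_triangle_ineq[THEN order_trans] abs_mult)
  also have "\<dots> \<le> (1 - (u - real k)) * B + (u - real k) * B"
    using k assms(1) by (intro add_mono mult_left_mono) auto
  finally show ?thesis
    by (simp add: algebra_simps)
qed

lemma continuous_on_lin_interp: "continuous_on {0..} (lin_interp y)"
  unfolding continuous_on_eq_continuous_within
proof
  fix u :: real assume "u \<in> {0..}"
  then have "0 \<le> u"
    by simp
  define k where "k = nat \<lfloor>u\<rfloor>"
  have k: "real k \<le> u" "u < real k + 1"
    using \<open>0 \<le> u\<close> unfolding k_def by linarith+
  have piece: "continuous_on {real j .. real j + 1} (lin_interp y)" for j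
  proof -
    have "continuous_on {real j .. real j + 1} (\<lambda>u. y j + (u - real j) * (y (Suc j) - y j))"
      by (intro continuous_intros)
    then show ?thesis
      by (rule continuous_on_cong[THEN iffD1, rotated 2]) (auto simp: lin_interp_eq)
  qed
  define J where "J = (if k = 0 then {0..1} else {real k - 1 .. real k + 1})"
  have "continuous_on J (lin_interp y)"
  proof (cases "k = 0")
    case False
    then have "J = {real (k - 1) .. real (k - 1) + 1} \<union> {real k .. real k + 1}"
      by (auto simp: J_def of_nat_diff)
    then show ?thesis
      using piece[of "k - 1"] piece[of k] by (simp add: continuous_on_closed_Un)
  qed (use piece[of 0] in \<open>simp add: J_def\<close>)
  moreover have "at u within {0..} = at u within J"
    by (rule at_within_nhd[of u "{real k - 1 <..< real k + 1}"]) (use k in \<open>auto simp: J_def\<close>)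
  moreover have "u \<in> J"
    using k by (auto simp: J_def)
  ultimately show "continuous (at u within {0..}) (lin_interp y)"
    by (simp add: continuous_on_eq_continuous_within)
qed

definition notch :: "nat \<Rightarrow> real" where
  "notch n = 1 / (real n + 1)"

lemma notch_pos: "0 < notch n" and notch_le_1: "notch n \<le> 1"
  by (auto simp: notch_def field_simps)

lemma eventually_notch_less:
  assumes "0 < e"
  obtains M where "\<And>m. M \<le> m \<Longrightarrow> notch m < e"
proof -
  have "notch \<longlonglongrightarrow> 0"
    using LIMSEQ_inverse_real_of_nat by (simp add: notch_def[abs_def] inverse_eq_divide add.commute)
  then show ?thesis
    using that assms order_tendstoD(2) eventually_sequentially by metis
qed

text \<open>\<open>spike n\<close> vanishes outside \<open>[2n, 2n+3]\<close>; it rises with slope \<open>1 + notch n\<close> on \<open>[2n, 2n+1]\<close>,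
  has a V-shaped dip down to \<open>notch n\<close> at \<open>2n + 3/2\<close>, and falls back on \<open>[2n+2, 2n+3]\<close>.\<close>

definition spike :: "nat \<Rightarrow> real \<Rightarrow> real" where
  "spike n u = max 0 (min ((1 + notch n) * min (u - 2 * real n) (2 * real n + 3 - u))
                          (notch n + \<bar>2 * u - 4 * real n - 3\<bar>))"

lemma spike_nonneg: "0 \<le> spike n u"
  by (simp add: spike_def)

lemma spike_eq_0:
  assumes "u \<le> 2 * real n \<or> 2 * real n + 3 \<le> u"
  shows "spike n u = 0"
proof -
  have "min (u - 2 * real n) (2 * real n + 3 - u) \<le> 0"
    using assms by auto
  then have "(1 + notch n) * min (u - 2 * real n) (2 * real n + 3 - u) \<le> 0"
    using notch_pos[of n] by (simp add: mult_nonneg_nonpos)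
  then show ?thesis
    by (simp add: spike_def)
qed

lemma spike_pos_imp:
  assumes "0 < spike n u"
  shows "2 * real n < u" "u < 2 * real n + 3"
  using spike_eq_0[of u n] assms by force+

lemma spike_rising:
  assumes "2 * real n \<le> u" "u \<le> 2 * real n + 1"
  shows "spike n u = (1 + notch n) * (u - 2 * real n)"
proof -
  have "(1 + notch n) * (u - 2 * real n) \<le> (1 + notch n) * 1"
    using assms notch_pos[of n] by (intro mult_left_mono) auto
  also have "\<dots> \<le> notch n + \<bar>2 * u - 4 * real n - 3\<bar>"
    using assms by simp
  finally have "(1 + notch n) * (u - 2 * real n) \<le> notch n + \<bar>2 * u - 4 * real n - 3\<bar>" .
  moreover have "min (u - 2 * real n) (2 * real n + 3 - u) = u - 2 * real n"
    using assms by simp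
  moreover have "0 \<le> (1 + notch n) * (u - 2 * real n)"
    using assms notch_pos[of n] by simp
  ultimately show ?thesis
    by (simp add: spike_def)
qed

lemma spike_dip:
  assumes "2 * real n + 1 \<le> u" "u \<le> 2 * real n + 2"
  shows "spike n u = notch n + \<bar>2 * u - 4 * real n - 3\<bar>"
proof -
  have "notch n + \<bar>2 * u - 4 * real n - 3\<bar> \<le> (1 + notch n) * 1"
    using assms by auto
  also have "\<dots> \<le> (1 + notch n) * min (u - 2 * real n) (2 * real n + 3 - u)"
    using assms notch_pos[of n] by (intro mult_left_mono) auto
  finally show ?thesis
    using notch_pos[of n] by (simp add: spike_def)
qed

lemma spike_falling:
  assumes "2 * real n + 2 \<le> u" "u \<le> 2 * real n + 3"
  shows "spike n u = (1 + notch n) * (2 * real n + 3 - u)"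
proof -
  have "(1 + notch n) * (2 * real n + 3 - u) \<le> (1 + notch n) * 1"
    using assms notch_pos[of n] by (intro mult_left_mono) auto
  also have "\<dots> \<le> notch n + \<bar>2 * u - 4 * real n - 3\<bar>"
    using assms by simp
  finally have "(1 + notch n) * (2 * real n + 3 - u) \<le> notch n + \<bar>2 * u - 4 * real n - 3\<bar>" .
  moreover have "min (u - 2 * real n) (2 * real n + 3 - u) = 2 * real n + 3 - u"
    using assms by simp
  moreover have "0 \<le> (1 + notch n) * (2 * real n + 3 - u)"
    using assms notch_pos[of n] by simp
  ultimately show ?thesis
    by (simp add: spike_def)
qed

lemma spike_le_3: "spike n u \<le> 3"
proof -
  define m where "m = min (u - 2 * real n) (2 * real n + 3 - u)"
  have "(1 + notch n) * m \<le> 3"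
  proof (cases "0 \<le> m")
    case True
    moreover have "m \<le> 3/2"
      by (simp add: m_def min_def)
    ultimately have "(1 + notch n) * m \<le> 2 * (3/2)"
      using notch_le_1[of n] by (intro mult_mono) auto
    then show ?thesis
      by simp
  next
    case False
    then have "(1 + notch n) * m \<le> 0"
      using notch_pos[of n] by (intro mult_nonneg_nonpos) auto
    then show ?thesis
      by simp
  qed
  then show ?thesis
    by (simp add: spike_def m_def)
qed

lemma spike_lipschitz: "\<bar>spike n u - spike n v\<bar> \<le> 2 * \<bar>u - v\<bar>"
proof -
  have max_le: "\<bar>max a c - max b d\<bar> \<le> L" and min_le: "\<bar>min a c - min b d\<bar> \<le> L"
    if "\<bar>a - b\<bar> \<le> L" "\<bar>c - d\<bar> \<le> L" for a b c d L :: real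
    using that by (auto simp: max_def min_def)
  define m where "m w = min (w - 2 * real n) (2 * real n + 3 - w)" for w
  have "\<bar>m u - m v\<bar> \<le> \<bar>u - v\<bar>"
    unfolding m_def by (rule min_le) auto
  then have "(1 + notch n) * \<bar>m u - m v\<bar> \<le> 2 * \<bar>u - v\<bar>"
    using notch_pos[of n] notch_le_1[of n] by (intro mult_mono) auto
  then have "\<bar>(1 + notch n) * m u - (1 + notch n) * m v\<bar> \<le> 2 * \<bar>u - v\<bar>"
    using notch_pos[of n] by (simp add: abs_mult flip: right_diff_distrib)
  moreover have "\<bar>(notch n + \<bar>2 * u - 4 * real n - 3\<bar>) - (notch n + \<bar>2 * v - 4 * real n - 3\<bar>)\<bar> \<le> 2 * \<bar>u - v\<bar>"
    by (simp add: abs_le_iff abs_if)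
  ultimately have "\<bar>min ((1 + notch n) * m u) (notch n + \<bar>2 * u - 4 * real n - 3\<bar>) -
                    min ((1 + notch n) * m v) (notch n + \<bar>2 * v - 4 * real n - 3\<bar>)\<bar> \<le> 2 * \<bar>u - v\<bar>"
    by (rule min_le)
  then show ?thesis
    unfolding spike_def m_def[symmetric] by (intro max_le) auto
qed

text \<open>The sequence \<open>(spike n u)\<^sub>n\<close> is stored as the bounded continuous function interpolating it
  linearly between the integers, extended evenly to \<open>\<real>\<close>.  This embeds the space of bounded sequences isometrically
  (\<open>nat\<close> is not a \<open>metric_space\<close>), so distances between profiles are governed by the spikes.\<close>

definition profile :: "real \<Rightarrow> (real \<Rightarrow>\<^sub>C real)" where
  "profile u = Bcontfun (\<lambda>y. lin_interp (\<lambda>n. spike n u) \<bar>y\<bar>)"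

lemma profile_apply: "apply_bcontfun (profile u) y = lin_interp (\<lambda>n. spike n u) \<bar>y\<bar>"
proof -
  have "continuous_on UNIV (\<lambda>y. lin_interp (\<lambda>n. spike n u) \<bar>y\<bar>)"
    by (rule continuous_on_compose2[OF continuous_on_lin_interp]) (auto intro: continuous_intros)
  moreover have "\<bar>lin_interp (\<lambda>n. spike n u) \<bar>y\<bar>\<bar> \<le> 3" for y
    using spike_nonneg spike_le_3 by (intro abs_lin_interp_le) (auto simp: abs_le_iff)
  then have "norm (lin_interp (\<lambda>n. spike n u) \<bar>y\<bar>) \<le> 3" for y
    by simp
  ultimately have "(\<lambda>y. lin_interp (\<lambda>n. spike n u) \<bar>y\<bar>) \<in> bcontfun"
    by (rule bcontfun_normI)
  then show ?thesis
    by (simp add: profile_def Bcontfun_inverse)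
qed

lemma profile_apply_of_nat [simp]: "apply_bcontfun (profile u) (real n) = spike n u"
  by (simp add: profile_apply lin_interp_of_nat)

lemma profile_apply_eq_0:
  assumes "2 * real (nat \<lfloor>\<bar>y\<bar>\<rfloor>) + 5 \<le> u"
  shows "apply_bcontfun (profile u) y = 0"
  using assms by (simp add: profile_apply lin_interp_def spike_eq_0)

lemma profile_0: "profile 0 = 0"
  by (rule bcontfun_eqI) (simp add: profile_apply lin_interp_def spike_eq_0)

lemma dist_profile_le: "dist (profile u) (profile v) \<le> 2 * \<bar>u - v\<bar>"
proof (rule dist_bound)
  fix y
  have "\<bar>lin_interp (\<lambda>n. spike n u - spike n v) \<bar>y\<bar>\<bar> \<le> 2 * \<bar>u - v\<bar>"
    using spike_lipschitz by (intro abs_lin_interp_le) auto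
  then show "dist (apply_bcontfun (profile u) y) (apply_bcontfun (profile v) y) \<le> 2 * \<bar>u - v\<bar>"
    by (simp add: profile_apply dist_real_def lin_interp_diff)
qed

lemma spike_dist_le_dist_profile: "\<bar>spike n u - spike n v\<bar> \<le> dist (profile u) (profile v)"
  using dist_bounded[of "profile u" "real n" "profile v"] by (simp add: dist_real_def)

lemma continuous_on_profile: "continuous_on S profile"
  unfolding continuous_on_iff
proof (intro ballI allI impI)
  fix x e assume "0 < (e::real)"
  then show "\<exists>d>0. \<forall>x'\<in>S. dist x' x < d \<longrightarrow> dist (profile x') (profile x) < e"
    by (intro exI[of _ "e/3"]) (auto intro: le_less_trans[OF dist_profile_le] simp: dist_real_def)
qed

text \<open>Blocks lie in \<open>[3, \<infinity>)\<close>, so the first coordinate of the path built below stays nonnegative.\<close>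

definition block :: "nat set \<Rightarrow> nat \<Rightarrow> real set" where
  "block A i = (if i \<in> A then {3 * real i + 3 .. 3 * real i + 4} else {3 * real i + 3})"

definition blocks :: "nat set \<Rightarrow> real set" where
  "blocks A = (\<Union>i. block A i)"

lemma block_bounds:
  assumes "x \<in> block A i"
  shows "3 * real i + 3 \<le> x" "x \<le> 3 * real i + 4"
  using assms by (auto simp: block_def split: if_splits)

lemma left_end_in_block: "3 * real i + 3 \<in> block A i"
  by (simp add: block_def)

lemma block_subset_blocks: "block A i \<subseteq> blocks A"
  by (auto simp: blocks_def)

lemma blocks_ge_3: "x \<in> blocks A \<Longrightarrow> 3 \<le> x"
  by (auto simp: blocks_def dest: block_bounds)

lemma connected_block: "connected (block A i)"
  by (simp add: block_def)

lemma finite_block_iff: "finite (block A i) \<longleftrightarrow> i \<notin> A"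
  by (simp add: block_def)

lemma block_index_mono:
  assumes "x \<in> block A i" "y \<in> block A j" "x \<le> y"
  shows "i \<le> j"
proof (rule ccontr)
  assume "\<not> i \<le> j"
  then have "real j + 1 \<le> real i"
    by simp
  then show False
    using block_bounds[OF assms(1)] block_bounds[OF assms(2)] assms(3) by linarith
qed

lemma block_disjoint: "i \<noteq> j \<Longrightarrow> block A i \<inter> block A j = {}"
  using block_index_mono by (metis disjoint_iff le_antisym nle_le)

lemma inj_block: "inj (block A)"
  using block_disjoint left_end_in_block by (metis disjoint_iff injI)

lemma Sup_block: "Sup (block A i) \<in> block A i" "x \<in> block A i \<Longrightarrow> x \<le> Sup (block A i)"
  by (auto simp: block_def)

lemma closed_blocks: "closed (blocks A)"
proof -
  have "locally_finite_in euclidean (range (block A))"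
    unfolding locally_finite_in_def
  proof (intro conjI ballI)
    fix x :: real
    have "i \<le> nat \<lceil>x\<rceil>" if meets: "block A i \<inter> ball x 1 \<noteq> {}" for i
    proof -
      obtain y where "y \<in> block A i" "y \<in> ball x 1"
        using meets by blast
      then have "3 * real i + 3 < x + 1"
        using block_bounds(1)[of y A i] by (auto simp: dist_real_def)
      then show ?thesis
        by linarith
    qed
    then have "{U \<in> range (block A). U \<inter> ball x 1 \<noteq> {}} \<subseteq> block A ` {..nat \<lceil>x\<rceil>}"
      by auto
    then show "\<exists>V. openin euclidean V \<and> x \<in> V \<and> finite {U \<in> range (block A). U \<inter> V \<noteq> {}}"
      by (intro exI[of _ "ball x 1"]) (auto elim: finite_subset)
  qed simp
  then have "closedin euclidean (\<Union>(range (block A)))"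
    by (intro closedin_locally_finite_Union) (auto simp: block_def)
  then show ?thesis
    by (simp add: blocks_def)
qed

lemma blocks_gap:
  assumes "z \<in> blocks A" "Sup (block A i) < z"
  shows "3 * real i + 6 \<le> z"
proof -
  obtain j where j: "z \<in> block A j"
    using assms(1) by (auto simp: blocks_def)
  have "i \<le> j"
    using block_index_mono[OF Sup_block(1) j] assms(2) by simp
  moreover have "j \<noteq> i"
    using Sup_block(2)[OF j] assms(2) j by auto
  ultimately have "real i + 1 \<le> real j"
    by simp
  then show ?thesis
    using block_bounds(1)[OF j] by linarith
qed

lemma blocks_between_consecutive:
  assumes x: "x \<in> block A i" and y: "y \<in> block A j" and "x < y"
    and gap: "\<And>z. x < z \<Longrightarrow> z < y \<Longrightarrow> z \<notin> blocks A"
  shows "j = Suc i"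
proof -
  have "i \<le> j"
    using block_index_mono[OF x y] \<open>x < y\<close> by simp
  moreover have "j \<noteq> i"
  proof
    assume "j = i"
    then have "(x + y) / 2 \<in> block A i"
      using x y \<open>x < y\<close> by (auto simp: block_def split: if_splits)
    then show False
      using gap[of "(x + y) / 2"] \<open>x < y\<close> block_subset_blocks by fastforce
  qed
  moreover have "\<not> Suc i < j"
  proof
    assume "Suc i < j"
    then have "real i + 2 \<le> real j"
      by simp
    then have "x < 3 * real (Suc i) + 3" "3 * real (Suc i) + 3 < y"
      using block_bounds[OF x] block_bounds[OF y] by auto
    then show False
      using gap left_end_in_block block_subset_blocks by blast
  qed
  ultimately show ?thesis
    by linarith
qed

lemma gap_between_blocks:
  assumes x: "x \<in> block A i" and y: "y \<in> block A j" and "i < j"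
  shows "x < 3 * real i + 5" "3 * real i + 5 < y" "3 * real i + 5 \<notin> blocks A"
proof -
  have "real i + 1 \<le> real j"
    using \<open>i < j\<close> by simp
  then show "x < 3 * real i + 5" "3 * real i + 5 < y"
    using block_bounds[OF x] block_bounds[OF y] by linarith+
  show "3 * real i + 5 \<notin> blocks A"
    using blocks_gap[of "3 * real i + 5" A i] block_bounds(2)[OF Sup_block(1), of A i] by linarith
qed

lemma connected_component_of_blocks:
  assumes x: "x \<in> block A i"
  shows "connected_component_of_set (top_of_set (blocks A)) x = block A i"
proof
  show "block A i \<subseteq> connected_component_of_set (top_of_set (blocks A)) x"
    using x connected_block block_subset_blocks
    by (intro connected_component_of_maximal) (auto simp: connectedin_subtopology)
next
  let ?C = "connected_component_of_set (top_of_set (blocks A)) x"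
  have C: "connected ?C" "?C \<subseteq> blocks A"
    using connectedin_connected_component_of[of "top_of_set (blocks A)" x]
    by (auto simp: connectedin_subtopology)
  have xC: "x \<in> ?C"
    using x block_subset_blocks by (auto simp: connected_component_of_refl)
  have between: "z \<in> blocks A" if "a \<in> ?C" "b \<in> ?C" "a \<le> z" "z \<le> b" for a b z
    using connected_contains_Icc[OF C(1) that(1,2)] C(2) that(3,4) by auto
  show "?C \<subseteq> block A i"
  proof
    fix y assume yC: "y \<in> ?C"
    obtain j where y: "y \<in> block A j"
      using yC C(2) by (auto simp: blocks_def)
    show "y \<in> block A i"
    proof (rule ccontr)
      assume "y \<notin> block A i"
      then consider "i < j" | "j < i"
        using y by (metis linorder_neqE_nat)
      then show False
      proof cases
        case 1
        then show False
          using gap_between_blocks[OF x y 1] between[OF xC yC] by force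
      next
        case 2
        then show False
          using gap_between_blocks[OF y x 2] between[OF yC xC] by force
      qed
    qed
  qed
qed

lemma connected_components_of_blocks:
  "connected_components_of (top_of_set (blocks A)) = range (block A)"
  unfolding connected_components_of_def
  using connected_component_of_blocks left_end_in_block
  by (auto simp: blocks_def image_iff) (metis connected_component_of_blocks left_end_in_block)

section \<open>The embedding of the line\<close>

definition visit :: "nat set \<Rightarrow> nat \<Rightarrow> real" where
  "visit A = (SOME c. range c \<subseteq> blocks A \<and> (\<forall>k\<in>blocks A. \<forall>r>0. \<forall>M. \<exists>m\<ge>M. dist (c m) k < r))"

lemma
  shows visit_in_blocks: "visit A m \<in> blocks A"
    and visit_recurrent: "k \<in> blocks A \<Longrightarrow> 0 < r \<Longrightarrow> \<exists>m\<ge>M. \<bar>visit A m - k\<bar> < r"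
proof -
  have "blocks A \<noteq> {}"
    using left_end_in_block block_subset_blocks by blast
  then have "\<exists>c :: nat \<Rightarrow> real. range c \<subseteq> blocks A \<and> (\<forall>k\<in>blocks A. \<forall>r>0. \<forall>M. \<exists>m\<ge>M. dist (c m) k < r)"
    by (rule recurrent_dense_sequence_exists)
  then have "range (visit A) \<subseteq> blocks A \<and>
               (\<forall>k\<in>blocks A. \<forall>r>0. \<forall>M. \<exists>m\<ge>M. dist (visit A m) k < r)"
    unfolding visit_def by (rule someI_ex)
  then show "visit A m \<in> blocks A" "k \<in> blocks A \<Longrightarrow> 0 < r \<Longrightarrow> \<exists>m\<ge>M. \<bar>visit A m - k\<bar> < r"
    by (auto simp: dist_real_def)
qed

lemma visit_ge_3: "3 \<le> visit A m"
  using blocks_ge_3 visit_in_blocks by blast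

text \<open>The nodes of the piecewise linear first coordinate: on \<open>[2n+1, 2n+2]\<close> it runs from
  \<open>visit A n - 1\<close> to \<open>visit A n + 1\<close>, passing \<open>visit A n\<close> exactly at the dip of \<open>spike n\<close>.\<close>

definition node :: "nat set \<Rightarrow> nat \<Rightarrow> real" where
  "node A k = (if k = 0 then 0 else if odd k then visit A ((k - 1) div 2) - 1 else visit A ((k - 2) div 2) + 1)"

definition track :: "nat set \<Rightarrow> real \<Rightarrow> real" where
  "track A = lin_interp (node A)"

lemma track_dip:
  assumes "2 * real n + 1 \<le> u" "u \<le> 2 * real n + 2"
  shows "track A u = visit A n + (2 * u - 4 * real n - 3)"
  using lin_interp_eq[of "2 * n + 1" u "node A"] assms by (simp add: track_def node_def algebra_simps)

lemma track_initial:
  assumes "0 \<le> u" "u \<le> 1"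
  shows "track A u = u * (visit A 0 - 1)"
  using lin_interp_eq[of 0 u "node A"] assms by (simp add: track_def node_def)

lemma track_nonneg: "0 \<le> u \<Longrightarrow> 0 \<le> track A u"
proof -
  have "0 \<le> node A k" for k
    using visit_ge_3[of A "(k - 1) div 2"] visit_ge_3[of A "(k - 2) div 2"] by (simp add: node_def)
  then show "0 \<le> u \<Longrightarrow> 0 \<le> track A u"
    unfolding track_def by (rule lin_interp_nonneg)
qed

lemma continuous_on_track: "continuous_on {0..} (track A)"
  unfolding track_def by (rule continuous_on_lin_interp)

lemma path_phase_cases [consumes 1, case_names initial dip cross]:
  fixes u :: real
  assumes "0 < u"
  obtains (initial) "u \<le> 1"
    | (dip) n where "2 * real n + 1 \<le> u" "u \<le> 2 * real n + 2"
    | (cross) n where "2 * real n + 2 < u" "u < 2 * real n + 3"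
proof -
  consider "u \<le> 1" | "1 < u"
    by linarith
  then show ?thesis
  proof cases
    case 2
    define n where "n = nat \<lfloor>(u - 1) / 2\<rfloor>"
    have n: "real n = of_int \<lfloor>(u - 1) / 2\<rfloor>"
      using 2 by (simp add: n_def)
    have "2 * real n + 1 \<le> u" "u < 2 * real n + 3"
      using of_int_floor_le[of "(u - 1) / 2"] real_of_int_floor_add_one_gt[of "(u - 1) / 2"]
      unfolding n by (simp_all add: field_simps)
    then show ?thesis
      using that(2)[of n] that(3)[of n] by linarith
  qed (use that(1) in blast)
qed

lemma spike_pos_in_dip:
  assumes "2 * real n + 1 \<le> u" "u \<le> 2 * real n + 2"
  shows "0 < spike n u"
  using spike_dip[OF assms] notch_pos[of n] by simp

lemma spike_pos_in_cross:
  assumes "2 * real n + 2 < u" "u < 2 * real n + 3"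
  shows "0 < spike n u" "0 < spike (Suc n) u"
proof -
  have "spike n u = (1 + notch n) * (2 * real n + 3 - u)"
    using spike_falling assms by simp
  then show "0 < spike n u"
    using notch_pos[of n] assms by simp
  have "spike (Suc n) u = (1 + notch (Suc n)) * (u - 2 * real (Suc n))"
    using spike_rising assms by simp
  then show "0 < spike (Suc n) u"
    using notch_pos[of "Suc n"] assms by simp
qed

lemma spike_pos_initial:
  assumes "0 < u" "u \<le> 1"
  shows "0 < spike 0 u"
  using spike_rising[of 0 u] assms notch_pos[of 0] by simp

lemma spike_index_initial:
  assumes "0 < spike k u" "u \<le> 1"
  shows "k = 0"
  using spike_pos_imp[OF assms(1)] assms(2) by simp

lemma spike_index_dip:
  assumes "0 < spike k u" "2 * real n + 1 \<le> u" "u \<le> 2 * real n + 2"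
  shows "k = n"
proof -
  have "real k < real n + 1" "real n < real k + 1"
    using spike_pos_imp[OF assms(1)] assms(2,3) by linarith+
  then show ?thesis
    by linarith
qed

lemma spike_index_cross:
  assumes "0 < spike k u" "2 * real n + 2 < u" "u < 2 * real n + 3"
  shows "k = n \<or> k = Suc n"
proof -
  have "real k < real n + 2" "real n < real k + 1"
    using spike_pos_imp[OF assms(1)] assms(2,3) by linarith+
  then show ?thesis
    by linarith
qed

lemma profile_nonzero:
  assumes "0 < u"
  shows "profile u \<noteq> 0"
proof -
  from assms have "\<exists>k. 0 < spike k u"
  proof (cases rule: path_phase_cases)
    case initial
    then show ?thesis
      using spike_pos_initial assms by blast
  next
    case (dip n)
    then show ?thesis
      using spike_pos_in_dip by blast
  next
    case (cross n)
    then show ?thesis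
      using spike_pos_in_cross(1) by blast
  qed
  then obtain k where "0 < spike k u"
    by blast
  then have "apply_bcontfun (profile u) (real k) \<noteq> apply_bcontfun 0 (real k)"
    by simp
  then show ?thesis
    by metis
qed

lemma track_profile_inj_dip:
  assumes u: "2 * real n + 1 \<le> u" "u \<le> 2 * real n + 2" and v: "0 < v"
    and track: "track A u = track A v" and spikes: "\<And>k. spike k u = spike k v"
  shows "u = v"
proof -
  have pos: "0 < spike n v"
    using spike_pos_in_dip[OF u] spikes by simp
  from v show ?thesis
  proof (cases rule: path_phase_cases)
    case initial
    then have "n = 0"
      using spike_index_initial[OF pos] by simp
    have "1 \<le> u"
      using u \<open>n = 0\<close> by simp
    then have "1 * (visit A 0 - 1) \<le> visit A 0 + (2 * u - 3)"
      by simp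
    also have "\<dots> = v * (visit A 0 - 1)"
      using track track_dip[OF u] track_initial[of v A] \<open>n = 0\<close> v initial by simp
    finally have "1 \<le> v"
      using visit_ge_3[of A 0] by (simp only: mult_le_cancel_right)
    then have "v = 1"
      using initial by simp
    then have "visit A 0 + (2 * u - 3) = visit A 0 - 1"
      using track track_dip[OF u] track_initial[of v A] \<open>n = 0\<close> by simp
    then show ?thesis
      using \<open>v = 1\<close> by simp
  next
    case (dip m)
    then have "n = m"
      using spike_index_dip[OF pos] by simp
    then show ?thesis
      using track track_dip[OF u] track_dip[OF dip] by simp
  next
    case (cross m)
    then have "m = n" "Suc m = n"
      using spike_pos_in_cross[OF cross] spikes spike_index_dip[OF _ u] by metis+
    then show ?thesis
      by simp
  qed
qed

lemma track_profile_inj_cross: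
  assumes u: "2 * real n + 2 < u" "u < 2 * real n + 3" and v: "0 < v"
    and track: "track A u = track A v" and spikes: "\<And>k. spike k u = spike k v"
  shows "u = v"
proof -
  have pos: "0 < spike n v" "0 < spike (Suc n) v"
    using spike_pos_in_cross[OF u] spikes by simp_all
  from v show ?thesis
  proof (cases rule: path_phase_cases)
    case initial
    then show ?thesis
      using spike_index_initial[OF pos(2)] by simp
  next
    case (dip m)
    then show ?thesis
      using track_profile_inj_dip[of m v u A] u track spikes by simp
  next
    case (cross m)
    then have "n = m \<or> n = Suc m" "Suc n = m \<or> Suc n = Suc m"
      using spike_index_cross pos by blast+
    then have "n = m"
      by auto
    then have "(1 + notch (Suc n)) * (u - 2 * real (Suc n)) = (1 + notch (Suc n)) * (v - 2 * real (Suc n))"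
      using spike_rising[of "Suc n" u] spike_rising[of "Suc n" v] spikes[of "Suc n"] u cross by simp
    then show ?thesis
      using notch_pos[of "Suc n"] by simp
  qed
qed

lemma track_profile_inj:
  assumes u: "0 < u" and v: "0 < v"
    and track: "track A u = track A v" and "profile u = profile v"
  shows "u = v"
proof -
  have spikes: "spike k u = spike k v" for k
    using \<open>profile u = profile v\<close> profile_apply_of_nat by metis
  from u show ?thesis
  proof (cases rule: path_phase_cases)
    case initial
    note u_initial = this
    from v show ?thesis
    proof (cases rule: path_phase_cases)
      case initial
      have "u * (visit A 0 - 1) = v * (visit A 0 - 1)"
        using track track_initial[of u A] track_initial[of v A] u v u_initial initial by simp
      then show ?thesis
        using visit_ge_3[of A 0] by simp
    next
      case (dip m)
      then show ?thesis
        using track_profile_inj_dip[of m v u A] u track spikes by simp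
    next
      case (cross m)
      then show ?thesis
        using track_profile_inj_cross[of m v u A] u track spikes by simp
    qed
  qed (use track_profile_inj_dip track_profile_inj_cross v track spikes in blast)+
qed

definition embed_line :: "nat set \<Rightarrow> real \<Rightarrow> real \<times> (real \<Rightarrow>\<^sub>C real)" where
  "embed_line A t = (if 0 \<le> t then (t, 0) else (track A (- t), profile (- t)))"

lemma embed_line_nonneg: "0 \<le> t \<Longrightarrow> embed_line A t = (t, 0)"
  by (simp add: embed_line_def)

lemma embed_line_neg: "t \<le> 0 \<Longrightarrow> embed_line A t = (track A (- t), profile (- t))"
  by (simp add: embed_line_def track_def node_def profile_0)

lemma fst_embed_line_nonneg: "0 \<le> fst (embed_line A t)"
  by (simp add: embed_line_def track_nonneg)

lemma inj_embed_line: "inj (embed_line A)"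
proof (rule injI)
  fix s t assume eq: "embed_line A s = embed_line A t"
  consider "0 \<le> s" "0 \<le> t" | "0 \<le> s" "t < 0" | "s < 0" "0 \<le> t" | "s < 0" "t < 0"
    by linarith
  then show "s = t"
  proof cases
    case 4
    then show ?thesis
      using eq track_profile_inj[of "- s" "- t" A] by (simp add: embed_line_def)
  qed (use eq profile_nonzero in \<open>auto simp: embed_line_def\<close>)
qed

lemma continuous_on_embed_line: "continuous_on UNIV (embed_line A)"
proof -
  have "continuous_on {0..} (\<lambda>t. (t, 0 :: real \<Rightarrow>\<^sub>C real))"
    by (intro continuous_intros)
  then have "continuous_on {0..} (embed_line A)"
    by (rule continuous_on_cong[THEN iffD1, rotated 2]) (auto simp: embed_line_nonneg)
  moreover have "continuous_on {..0} (\<lambda>t. (track A (- t), profile (- t)))"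
    by (intro continuous_intros continuous_on_compose2[OF continuous_on_track]
        continuous_on_compose2[OF continuous_on_profile]) auto
  then have "continuous_on {..0} (embed_line A)"
    by (rule continuous_on_cong[THEN iffD1, rotated 2]) (auto simp: embed_line_neg)
  ultimately have "continuous_on ({..0} \<union> {0..}) (embed_line A)"
    by (intro continuous_on_closed_Un) auto
  moreover have "{..0} \<union> {0..} = (UNIV :: real set)"
    by auto
  ultimately show ?thesis
    by simp
qed

lemma closed_range_embed_line: "closed (range (embed_line A))"
  unfolding closed_def[symmetric] closure_subset_eq[symmetric]
proof
  fix z assume z: "z \<in> closure (range (embed_line A))"
  show "z \<in> range (embed_line A)"
  proof (cases "snd z = 0")
    case False
    then obtain y where y: "apply_bcontfun (snd z) y \<noteq> 0"
      by (metis bcontfun_eqI zero_bcontfun.rep_eq)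
    define L where "L = 2 * real (nat \<lfloor>\<bar>y\<bar>\<rfloor>) + 5"
    have "z \<in> embed_line A ` {- L .. 0}"
    proof (rule in_image_if_closure_range_localized[OF _ compact_Icc z])
      show "continuous_on {- L .. 0} (embed_line A)"
        by (rule continuous_on_subset[OF continuous_on_embed_line]) simp
      show "0 < \<bar>apply_bcontfun (snd z) y\<bar>"
        using y by simp
      fix t assume "dist z (embed_line A t) < \<bar>apply_bcontfun (snd z) y\<bar>"
      then have "apply_bcontfun (snd (embed_line A t)) y \<noteq> 0"
        using abs_apply_snd_diff_le_dist[of z y "embed_line A t"] by auto
      then show "t \<in> {- L .. 0}"
        using profile_apply_eq_0[of y "- t"] by (force simp: embed_line_def L_def split: if_splits)
    qed
    then show ?thesis
      by blast
  next
    case True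
    have "0 \<le> fst z"
    proof (rule ccontr)
      assume "\<not> 0 \<le> fst z"
      then have "0 < - fst z"
        by simp
      then obtain t where "dist (embed_line A t) z < - fst z"
        using z unfolding closure_approachable by blast
      then show False
        using abs_fst_diff_le_dist[of "embed_line A t" z] fst_embed_line_nonneg[of A t] by linarith
    qed
    then have "z = embed_line A (fst z)"
      using True by (simp add: embed_line_def prod_eq_iff)
    then show ?thesis
      by (metis rangeI)
  qed
qed

definition tau :: "nat set \<Rightarrow> real topology" where
  "tau A = pullback_topology UNIV (embed_line A) euclidean"

lemma tau_in_coarser_Hausdorff_topologies: "tau A \<in> coarser_Hausdorff_topologies"
  unfolding coarser_Hausdorff_topologies_def tau_def
  using Hausdorff_space_pullback[OF inj_embed_line] openin_pullback_imp_open[OF continuous_on_embed_line]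
  by auto

lemma completely_metrizable_space_tau: "completely_metrizable_space (tau A)"
  unfolding tau_def by (rule completely_metrizable_space_pullback[OF inj_embed_line closed_range_embed_line])

section \<open>Local structure of \<open>tau A\<close>\<close>

lemma embed_line_dist_lower_bounds:
  assumes "s \<le> 0" "0 \<le> t"
  shows "\<bar>track A (- s) - t\<bar> \<le> dist (embed_line A s) (embed_line A t)"
    and "spike k (- s) \<le> dist (embed_line A s) (embed_line A t)"
  using abs_fst_diff_le_dist[of "embed_line A s" "embed_line A t"]
    abs_apply_snd_diff_le_dist[of "embed_line A s" "real k" "embed_line A t"] spike_nonneg[of k "- s"]
  by (simp_all add: embed_line_neg embed_line_nonneg assms)

definition dip_point :: "nat \<Rightarrow> real \<Rightarrow> real" where
  "dip_point m \<theta> = 2 * real m + 3/2 + \<theta>/2"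

lemma
  assumes "0 \<le> \<theta>" "\<theta> \<le> 1"
  shows track_dip_point: "track A (dip_point m \<theta>) = visit A m + \<theta>"
    and spike_dip_point: "spike m (dip_point m \<theta>) = notch m + \<theta>"
    and spike_dip_point_other: "k \<noteq> m \<Longrightarrow> spike k (dip_point m \<theta>) = 0"
    and dist_profile_dip_point: "dist (profile (dip_point m \<theta>)) 0 \<le> notch m + \<theta>"
proof -
  have u: "2 * real m + 1 \<le> dip_point m \<theta>" "dip_point m \<theta> \<le> 2 * real m + 2"
    using assms by (auto simp: dip_point_def)
  show "track A (dip_point m \<theta>) = visit A m + \<theta>"
    using track_dip[OF u] by (simp add: dip_point_def)
  show spike_m: "spike m (dip_point m \<theta>) = notch m + \<theta>"
    using spike_dip[OF u] assms by (simp add: dip_point_def)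
  show other: "spike k (dip_point m \<theta>) = 0" if "k \<noteq> m" for k
    using spike_index_dip[OF _ u] spike_nonneg[of k "dip_point m \<theta>"] that by force
  show "dist (profile (dip_point m \<theta>)) 0 \<le> notch m + \<theta>"
  proof (rule dist_bound)
    fix y
    have "\<bar>spike k (dip_point m \<theta>)\<bar> \<le> notch m + \<theta>" for k
      using spike_m other[of k] notch_pos[of m] assms by (cases "k = m") auto
    then have "\<bar>lin_interp (\<lambda>k. spike k (dip_point m \<theta>)) \<bar>y\<bar>\<bar> \<le> notch m + \<theta>"
      by (intro abs_lin_interp_le) auto
    then show "dist (apply_bcontfun (profile (dip_point m \<theta>)) y) (apply_bcontfun 0 y) \<le> notch m + \<theta>"
      by (simp add: profile_apply dist_real_def)
  qed
qed

lemma dist_embed_line_dip_point: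
  assumes "0 \<le> \<theta>" "\<theta> \<le> 1" "0 \<le> k"
  shows "dist (embed_line A (- dip_point m \<theta>)) (embed_line A k) \<le> \<bar>visit A m - k\<bar> + notch m + 2 * \<theta>"
proof -
  have "0 \<le> dip_point m \<theta>"
    using assms by (simp add: dip_point_def)
  then have "embed_line A (- dip_point m \<theta>) = (track A (dip_point m \<theta>), profile (dip_point m \<theta>))"
    by (simp add: embed_line_neg)
  moreover have "embed_line A k = (k, 0)"
    using assms(3) by (rule embed_line_nonneg)
  ultimately have "dist (embed_line A (- dip_point m \<theta>)) (embed_line A k)
             \<le> dist (track A (dip_point m \<theta>)) k + dist (profile (dip_point m \<theta>)) 0"
    by (simp only: dist_Pair_le_add)
  moreover have "dist (track A (dip_point m \<theta>)) k \<le> \<bar>visit A m - k\<bar> + \<theta>"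
    using track_dip_point[OF assms(1,2)] abs_triangle_ineq[of "visit A m - k" \<theta>] assms(1)
    by (simp add: dist_real_def algebra_simps)
  ultimately show ?thesis
    using dist_profile_dip_point[OF assms(1,2), of m] by linarith
qed

text \<open>At a dip the path passes some \<open>visit A n \<in> blocks A\<close> in its first coordinate, with the
  spike height dominating the offset; in between, two complementary spikes add up to at least 1.\<close>

lemma dist_embed_line_left_ge:
  assumes "0 \<le> t" "1 \<le> u" and far: "\<And>n. \<delta> \<le> \<bar>visit A n - t\<bar>"
  shows "min (\<delta>/2) (1/2) \<le> dist (embed_line A (- u)) (embed_line A t)"
proof -
  have "- u \<le> 0"
    using \<open>1 \<le> u\<close> by simp
  note lower = embed_line_dist_lower_bounds[OF this \<open>0 \<le> t\<close>, where A = A, simplified]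
  have at_dip: "\<delta> \<le> 2 * dist (embed_line A (- u)) (embed_line A t)"
    if "2 * real n + 1 \<le> u" "u \<le> 2 * real n + 2" for n
  proof -
    have "spike n u = notch n + \<bar>track A u - visit A n\<bar>"
      using spike_dip[OF that] track_dip[OF that] by simp
    then have "\<bar>visit A n - t\<bar> \<le> \<bar>track A u - t\<bar> + spike n u"
      using notch_pos[of n] by linarith
    then show ?thesis
      using far[of n] lower(1) lower(2)[of n] by linarith
  qed
  from \<open>1 \<le> u\<close> have "0 < u"
    by simp
  then show ?thesis
  proof (cases rule: path_phase_cases)
    case initial
    then show ?thesis
      using at_dip[of 0] \<open>1 \<le> u\<close> by simp
  next
    case (dip n)
    then show ?thesis
      using at_dip by fastforce
  next
    case (cross n)
    have "1 * (2 * real n + 3 - u) \<le> (1 + notch n) * (2 * real n + 3 - u)"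
      using cross notch_pos[of n] by (intro mult_right_mono) auto
    then have "2 * real n + 3 - u \<le> spike n u"
      using spike_falling[of n u] cross by simp
    moreover have "1 * (u - 2 * real (Suc n)) \<le> (1 + notch (Suc n)) * (u - 2 * real (Suc n))"
      using cross notch_pos[of "Suc n"] by (intro mult_right_mono) auto
    then have "u - 2 * real (Suc n) \<le> spike (Suc n) u"
      using spike_rising[of "Suc n" u] cross by simp
    ultimately have "1 \<le> spike n u + spike (Suc n) u"
      by simp
    then show ?thesis
      using lower(2)[of n] lower(2)[of "Suc n"] by linarith
  qed
qed

lemma embed_line_far_left:
  assumes "t \<notin> blocks A"
  obtains L \<rho> where "0 < \<rho>" "\<And>s. s \<le> - L \<Longrightarrow> \<rho> \<le> dist (embed_line A s) (embed_line A t)"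
proof (cases "t < 0")
  case True
  then have "profile (- t) \<noteq> 0"
    using profile_nonzero by simp
  then obtain y where y: "apply_bcontfun (profile (- t)) y \<noteq> 0"
    by (metis bcontfun_eqI zero_bcontfun.rep_eq)
  show ?thesis
  proof (rule that[of "\<bar>apply_bcontfun (profile (- t)) y\<bar>" "2 * real (nat \<lfloor>\<bar>y\<bar>\<rfloor>) + 5"])
    fix s assume s: "s \<le> - (2 * real (nat \<lfloor>\<bar>y\<bar>\<rfloor>) + 5)"
    then have "apply_bcontfun (profile (- s)) y = 0"
      using profile_apply_eq_0[of y "- s"] by simp
    moreover have "s \<le> 0"
      using s of_nat_0_le_iff[of "nat \<lfloor>\<bar>y\<bar>\<rfloor>"] by linarith
    ultimately show "\<bar>apply_bcontfun (profile (- t)) y\<bar> \<le> dist (embed_line A s) (embed_line A t)"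
      using abs_apply_snd_diff_le_dist[of "embed_line A s" y "embed_line A t"] True
      by (simp add: embed_line_neg)
  qed (use y in simp)
next
  case False
  obtain \<delta> where \<delta>: "0 < \<delta>" "ball t \<delta> \<inter> blocks A = {}"
    using assms closed_blocks[of A] by (metis open_Compl open_contains_ball_eq Compl_iff disjoint_eq_subset_Compl)
  have far: "\<delta> \<le> \<bar>visit A n - t\<bar>" for n
    using \<delta>(2) visit_in_blocks[of A n] by (force simp: dist_real_def)
  show ?thesis
  proof (rule that[of "min (\<delta>/2) (1/2)" 1])
    fix s :: real assume "s \<le> - 1"
    then show "min (\<delta>/2) (1/2) \<le> dist (embed_line A s) (embed_line A t)"
      using dist_embed_line_left_ge[of t "- s" \<delta> A] far False by simp
  qed (use \<delta>(1) in simp)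
qed

lemma inverse_continuous_at_embed_line:
  assumes "t \<notin> blocks A"
  shows "inverse_continuous_at (embed_line A) UNIV t"
proof -
  obtain L \<rho> where L: "0 < \<rho>" "\<And>s. s \<le> - L \<Longrightarrow> \<rho> \<le> dist (embed_line A s) (embed_line A t)"
    using embed_line_far_left[OF assms] by blast
  define R where "R = \<bar>fst (embed_line A t)\<bar> + 1"
  have right: "1 \<le> dist (embed_line A s) (embed_line A t)" if "R \<le> s" for s
    using abs_fst_diff_le_dist[of "embed_line A s" "embed_line A t"] that
    by (simp add: R_def embed_line_nonneg)
  have far: "min \<rho> 1 \<le> dist (embed_line A s) (embed_line A t)" if "s \<notin> {- L .. R}" for s
  proof -
    from that have "s \<le> - L \<or> R \<le> s"
      by auto
    then show ?thesis
      using L(2)[of s] right[of s] by linarith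
  qed
  show ?thesis
    by (rule inverse_continuous_at_if_far_outside_compact[OF continuous_on_embed_line
          inj_embed_line compact_Icc _ far]) (use L(1) in simp)
qed

lemma dip_points_separated:
  assumes "0 \<le> \<theta>" "\<theta> \<le> 1" "0 \<le> \<theta>'" "\<theta>' \<le> 1" "m \<noteq> m'"
  shows "notch m + \<theta> \<le> dist (embed_line A (- dip_point m \<theta>)) (embed_line A (- dip_point m' \<theta>'))"
proof -
  have "0 \<le> dip_point m \<theta>" "0 \<le> dip_point m' \<theta>'"
    using assms by (simp_all add: dip_point_def)
  then have "\<bar>spike m (dip_point m \<theta>) - spike m (dip_point m' \<theta>')\<bar>
             \<le> dist (embed_line A (- dip_point m \<theta>)) (embed_line A (- dip_point m' \<theta>'))"
    using spike_dist_le_dist_profile[of m "dip_point m \<theta>" "dip_point m' \<theta>'"]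
      dist_snd_le[of "embed_line A (- dip_point m \<theta>)" "embed_line A (- dip_point m' \<theta>')"]
    by (simp add: embed_line_neg)
  then show ?thesis
    using spike_dip_point[OF assms(1,2)] spike_dip_point_other[OF assms(3,4)] assms(5) notch_pos[of m] assms(1)
    by simp
qed

lemma infinite_recurrences:
  assumes "k \<in> blocks A" "0 < q"
  shows "infinite {m. M \<le> m \<and> \<bar>visit A m - k\<bar> < q}"
  unfolding infinite_nat_iff_unbounded_le
proof
  fix N
  obtain m where "max N M \<le> m" "\<bar>visit A m - k\<bar> < q"
    using visit_recurrent[OF assms] by blast
  then show "\<exists>m\<ge>N. m \<in> {m. M \<le> m \<and> \<bar>visit A m - k\<bar> < q}"
    by auto
qed

text \<open>Within distance \<open>r\<close> of \<open>embed_line A k\<close>, the points of the path at the dips passing close to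
  \<open>k\<close>, lifted to a common spike height \<open>q \<le> r/4\<close>, are pairwise at least \<open>q\<close> apart.\<close>

lemma not_locally_compact_at_tau:
  assumes k: "k \<in> blocks A"
  shows "\<not> locally_compact_at (tau A) k"
  unfolding tau_def
proof (rule not_locally_compact_at_pullback)
  fix r :: real assume "0 < r"
  define q where "q = min r 1 / 4"
  have q: "0 < q" "q \<le> r / 4" "q \<le> 1/4"
    using \<open>0 < r\<close> by (auto simp: q_def)
  obtain M where M: "\<And>m. M \<le> m \<Longrightarrow> notch m < q"
    using eventually_notch_less[OF q(1)] by blast
  define I where "I = {m. M \<le> m \<and> \<bar>visit A m - k\<bar> < q}"
  define \<theta> where "\<theta> m = q - notch m" for m
  define p where "p m = - dip_point m (\<theta> m)" for m
  have \<theta>: "0 \<le> \<theta> m" "\<theta> m \<le> 1" if "m \<in> I" for m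
    using that M[of m] notch_pos[of m] q by (auto simp: I_def \<theta>_def)
  have "0 \<le> k"
    using blocks_ge_3[OF k] by simp
  have near: "dist (embed_line A (p m)) (embed_line A k) < r" if "m \<in> I" for m
  proof -
    have "dist (embed_line A (p m)) (embed_line A k) \<le> \<bar>visit A m - k\<bar> + notch m + 2 * \<theta> m"
      unfolding p_def by (rule dist_embed_line_dip_point[OF \<theta>[OF that] \<open>0 \<le> k\<close>])
    moreover have "\<bar>visit A m - k\<bar> < q" "0 < notch m" "2 * \<theta> m = 2 * q - 2 * notch m"
      using that notch_pos by (auto simp: I_def \<theta>_def)
    ultimately show ?thesis
      using q by linarith
  qed
  moreover have "q \<le> dist (embed_line A (p m)) (embed_line A (p m'))" if "m \<in> I" "m' \<in> I" "m \<noteq> m'" for m m'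
    using dip_points_separated[OF \<theta>[OF that(1)] \<theta>[OF that(2)] that(3), of A] by (simp add: p_def \<theta>_def)
  moreover have "infinite I"
    unfolding I_def by (rule infinite_recurrences[OF k q(1)])
  ultimately show "\<exists>I :: nat set. \<exists>p e. infinite I \<and> 0 < e \<and>
             (\<forall>m\<in>I. dist (embed_line A (p m)) (embed_line A k) < r) \<and>
             (\<forall>m\<in>I. \<forall>m'\<in>I. m \<noteq> m' \<longrightarrow> e \<le> dist (embed_line A (p m)) (embed_line A (p m')))"
    using q(1) by blast
qed

lemma topspace_tau [simp]: "topspace (tau A) = UNIV"
  by (simp add: tau_def)

lemma locally_compact_at_tau: "t \<notin> blocks A \<Longrightarrow> locally_compact_at (tau A) t"
  unfolding tau_def
  by (rule locally_compact_at_pullback[OF continuous_on_embed_line inverse_continuous_at_embed_line])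

lemma non_locally_compact_points_tau: "non_locally_compact_points (tau A) = blocks A"
  using locally_compact_at_tau not_locally_compact_at_tau
  by (auto simp: non_locally_compact_points_def)

lemma subtopology_tau_blocks: "subtopology (tau A) (blocks A) = top_of_set (blocks A)"
  unfolding tau_def
proof (rule subtopology_pullback_eq_top_of_set[OF continuous_on_embed_line])
  fix w assume "w \<in> blocks A"
  then have "dist (embed_line A s) (embed_line A w) = dist s w" if "s \<in> blocks A" for s
    using that blocks_ge_3[of s A] blocks_ge_3[of w A] by (simp add: embed_line_nonneg dist_Pair_Pair)
  then show "inverse_continuous_at (embed_line A) (blocks A) w"
    unfolding inverse_continuous_at_def by auto
qed

lemma subtopology_tau_nonblocks: "subtopology (tau A) (- blocks A) = top_of_set (- blocks A)"
  unfolding tau_def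
  by (intro subtopology_pullback_eq_top_of_set[OF continuous_on_embed_line]
      inverse_continuous_at_subset[OF inverse_continuous_at_embed_line]) auto

lemma connectedin_tau: "connected S \<Longrightarrow> connectedin (tau A) S"
  using connectedin_continuous_map_image[OF continuous_map_id_pullback[OF continuous_on_embed_line]]
  by (simp add: tau_def)

lemma closure_subset_closure_of_tau: "closure S \<subseteq> tau A closure_of S"
  unfolding tau_def by (rule closure_subset_closure_of_pullback[OF continuous_on_embed_line])

lemma closure_of_tau_subset_Icc: "S \<subseteq> {a..b} \<Longrightarrow> tau A closure_of S \<subseteq> {a..b}"
  unfolding tau_def
  by (rule closure_of_pullback_subset[OF continuous_on_embed_line inj_embed_line compact_Icc])

lemma blocks_subset_closure_of_left_ray: "blocks A \<subseteq> tau A closure_of {..<M}"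
proof
  fix k assume k: "k \<in> blocks A"
  show "k \<in> tau A closure_of {..<M}"
    unfolding in_closure_of
  proof (intro conjI allI impI)
    fix U assume U: "k \<in> U \<and> openin (tau A) U"
    obtain r where r: "0 < r" "\<And>s. dist (embed_line A s) (embed_line A k) < r \<Longrightarrow> s \<in> U"
      using openin_pullback_contains_preimage_ball U unfolding tau_def by metis
    obtain M0 where M0: "\<And>m. M0 \<le> m \<Longrightarrow> notch m < r/2"
      using eventually_notch_less[of "r/2"] r(1) by auto
    obtain N :: nat where N: "- M < real N"
      using reals_Archimedean2 by blast
    have "0 < r/2"
      using r(1) by simp
    then obtain m where m: "max M0 N \<le> m" "\<bar>visit A m - k\<bar> < r/2"
      using visit_recurrent[OF k] by blast
    have "dist (embed_line A (- dip_point m 0)) (embed_line A k) \<le> \<bar>visit A m - k\<bar> + notch m + 2 * 0"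
      using blocks_ge_3[OF k] by (intro dist_embed_line_dip_point) auto
    also have "\<dots> < r"
      using m M0[of m] by simp
    finally have "- dip_point m 0 \<in> U"
      by (rule r(2))
    moreover have "- dip_point m 0 < M"
      using m N by (simp add: dip_point_def)
    ultimately show "\<exists>y. y \<in> {..<M} \<and> y \<in> U"
      by auto
  qed simp
qed

lemma connected_components_non_locally_compact_tau:
  "connected_components_of (subtopology (tau A) (non_locally_compact_points (tau A))) = range (block A)"
  unfolding non_locally_compact_points_tau subtopology_tau_blocks connected_components_of_blocks ..

lemma adjacent_in_tau_Suc: "adjacent_in (tau A) (block A i) (block A (Suc i))"
proof -
  define e where "e = Sup (block A i)"
  define b where "b = 3 * real (Suc i) + 3"
  have e: "e \<in> block A i" and b: "b \<in> block A (Suc i)"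
    unfolding e_def b_def by (rule Sup_block(1), rule left_end_in_block)
  have "e < b"
    using block_bounds(2)[OF e] by (simp add: b_def)
  have gap: "{e<..<b} \<inter> blocks A = {}"
    using blocks_gap[of _ A i] by (force simp: e_def b_def)
  have "tau A closure_of {e<..<b} \<subseteq> {e..b}"
    by (rule closure_of_tau_subset_Icc) auto
  moreover have "{e..b} \<subseteq> tau A closure_of {e<..<b}"
    using closure_subset_closure_of_tau[of "{e<..<b}" A] \<open>e < b\<close> by simp
  ultimately have cl: "tau A closure_of {e<..<b} = {e..b}"
    by (rule antisym)
  have "{e..b} \<inter> blocks A \<subseteq> block A i \<union> block A (Suc i)"
  proof
    fix z assume "z \<in> {e..b} \<inter> blocks A"
    then have "z = e \<or> z = b"
      using gap by force
    then show "z \<in> block A i \<union> block A (Suc i)"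
      using e b by blast
  qed
  moreover have "block A i \<noteq> block A (Suc i)"
    using inj_block[of A] by (metis injD n_not_Suc_n)
  ultimately show ?thesis
    unfolding adjacent_in_def non_locally_compact_points_tau
    using connectedin_tau[of "{e<..<b}" A] gap cl e b \<open>e < b\<close>
    by (intro conjI exI[of _ "{e<..<b}"]) auto
qed

section \<open>Rigidity\<close>

lemma blocks_subset_closure_of_unbounded_below:
  assumes "connected S" "S \<noteq> {}" "\<not> bdd_below S"
  shows "blocks A \<subseteq> tau A closure_of S"
proof -
  obtain s0 where s0: "s0 \<in> S"
    using assms(2) by blast
  have "{..<s0} \<subseteq> S"
  proof
    fix s assume "s \<in> {..<s0}"
    obtain s' where "s' \<in> S" "s' < s"
      using assms(3) unfolding bdd_below_def by (meson not_le)
    then show "s \<in> S"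
      using connected_contains_Icc[OF assms(1) _ s0] \<open>s \<in> {..<s0}\<close> by fastforce
  qed
  then show ?thesis
    using blocks_subset_closure_of_left_ray[of A s0] closure_of_mono by blast
qed

lemma bdd_above_if_disjoint_blocks:
  assumes "connected S" "S \<noteq> {}" "S \<inter> blocks A = {}"
  shows "bdd_above S"
proof (rule ccontr)
  assume unbounded: "\<not> bdd_above S"
  obtain s0 where s0: "s0 \<in> S"
    using assms(2) by blast
  obtain N :: nat where "s0 < real N"
    using reals_Archimedean2 by blast
  define p where "p = 3 * real N + 3"
  obtain s where s: "s \<in> S" "p < s"
    using unbounded unfolding bdd_above_def by (meson not_le)
  have "p \<in> S"
    using connected_contains_Icc[OF assms(1) s0 s(1)] \<open>s0 < real N\<close> s(2) by (auto simp: p_def)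
  moreover have "p \<in> blocks A"
    using left_end_in_block[of N A] block_subset_blocks[of A N] unfolding p_def by blast
  ultimately show False
    using assms(3) by blast
qed

lemma closure_of_tau_inter_blocks:
  assumes S: "connected S" "S \<noteq> {}" "bdd_below S" "bdd_above S" "S \<inter> blocks A = {}"
  shows "\<And>z. Inf S < z \<Longrightarrow> z < Sup S \<Longrightarrow> z \<notin> blocks A"
    and "tau A closure_of S \<inter> blocks A \<subseteq> {Inf S, Sup S}"
proof -
  have inner: "z \<in> S" if z: "Inf S < z" "z < Sup S" for z
  proof -
    obtain s1 where "s1 \<in> S" "s1 < z"
      using z(1) cInf_less_iff[OF S(2,3)] by auto
    moreover obtain s2 where "s2 \<in> S" "z < s2"
      using z(2) less_cSup_iff[OF S(2,4)] by auto
    ultimately have "{s1..s2} \<subseteq> S"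
      using connected_contains_Icc[OF S(1)] by simp
    then show ?thesis
      using \<open>s1 < z\<close> \<open>z < s2\<close> by auto
  qed
  then show gap: "\<And>z. Inf S < z \<Longrightarrow> z < Sup S \<Longrightarrow> z \<notin> blocks A"
    using S(5) by blast
  have "S \<subseteq> {Inf S .. Sup S}"
    using S(3,4) by (auto intro: cInf_lower cSup_upper)
  then have "tau A closure_of S \<subseteq> {Inf S .. Sup S}"
    by (rule closure_of_tau_subset_Icc)
  show "tau A closure_of S \<inter> blocks A \<subseteq> {Inf S, Sup S}"
  proof
    fix z assume z: "z \<in> tau A closure_of S \<inter> blocks A"
    then have "Inf S \<le> z" "z \<le> Sup S"
      using \<open>tau A closure_of S \<subseteq> {Inf S .. Sup S}\<close> by auto
    then show "z \<in> {Inf S, Sup S}"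
      using gap[of z] z by fastforce
  qed
qed

lemma bdd_below_if_closure_of_tau_meets_two_blocks:
  assumes "connected S" "S \<noteq> {}" "tau A closure_of S \<inter> blocks A \<subseteq> block A i \<union> block A j"
  shows "bdd_below S"
proof (rule ccontr)
  define l where "l = i + j + 1"
  assume "\<not> bdd_below S"
  then have "blocks A \<subseteq> tau A closure_of S"
    by (rule blocks_subset_closure_of_unbounded_below[OF assms(1,2)])
  then have "3 * real l + 3 \<in> tau A closure_of S \<inter> blocks A"
    using left_end_in_block[of l A] block_subset_blocks[of A l] by blast
  then show False
    using assms(3) left_end_in_block[of l A] block_disjoint[of l i A] block_disjoint[of l j A]
    by (auto simp: l_def)
qed

lemma adjacent_in_tau_imp:
  assumes "adjacent_in (tau A) (block A i) (block A j)"
  shows "j = Suc i \<or> i = Suc j"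
proof -
  obtain S where S: "connectedin (tau A) S" "S \<inter> blocks A = {}"
      "tau A closure_of S \<inter> blocks A \<subseteq> block A i \<union> block A j"
      "tau A closure_of S \<inter> block A i \<noteq> {}" "tau A closure_of S \<inter> block A j \<noteq> {}"
    and "block A i \<noteq> block A j"
    using assms unfolding adjacent_in_def non_locally_compact_points_tau by blast
  have "connectedin (subtopology (tau A) (- blocks A)) S"
    using S(1,2) by (auto simp: connectedin_subtopology)
  then have conn: "connected S"
    by (simp add: subtopology_tau_nonblocks connectedin_subtopology)
  obtain x y where x: "x \<in> tau A closure_of S" "x \<in> block A i"
    and y: "y \<in> tau A closure_of S" "y \<in> block A j"
    using S(4,5) by blast
  have "S \<noteq> {}"
    using x(1) by auto
  have bdd: "bdd_below S" "bdd_above S"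
    using bdd_below_if_closure_of_tau_meets_two_blocks[OF conn \<open>S \<noteq> {}\<close> S(3)]
      bdd_above_if_disjoint_blocks[OF conn \<open>S \<noteq> {}\<close> S(2)] by blast+
  note ends = closure_of_tau_inter_blocks[OF conn \<open>S \<noteq> {}\<close> bdd S(2)]
  have "x \<in> {Inf S, Sup S}" "y \<in> {Inf S, Sup S}"
    using ends(2) x y block_subset_blocks by blast+
  moreover have "x \<noteq> y"
    using x(2) y(2) block_disjoint[of i j A] \<open>block A i \<noteq> block A j\<close> by blast
  moreover have "Inf S \<le> Sup S"
    using \<open>S \<noteq> {}\<close> bdd by (meson cInf_le_cSup)
  ultimately consider "x = Inf S" "y = Sup S" "x < y" | "y = Inf S" "x = Sup S" "y < x"
    by fastforce
  then show ?thesis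
  proof cases
    case 1
    then show ?thesis
      using blocks_between_consecutive[OF x(2) y(2)] ends(1) by blast
  next
    case 2
    then show ?thesis
      using blocks_between_consecutive[OF y(2) x(2)] ends(1) by blast
  qed
qed

lemma adjacent_in_tau_iff:
  "adjacent_in (tau A) (block A i) (block A j) \<longleftrightarrow> j = Suc i \<or> i = Suc j"
proof (rule iffI)
  assume "adjacent_in (tau A) (block A i) (block A j)"
  then show "j = Suc i \<or> i = Suc j"
    by (rule adjacent_in_tau_imp)
next
  assume "j = Suc i \<or> i = Suc j"
  then show "adjacent_in (tau A) (block A i) (block A j)"
  proof
    assume "j = Suc i"
    then show ?thesis
      using adjacent_in_tau_Suc[of A i] by simp
  next
    assume "i = Suc j"
    then show ?thesis
      using adjacent_in_sym[OF adjacent_in_tau_Suc[of A j]] by simp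
  qed
qed

lemma homeomorphic_map_tau_permutes_blocks:
  assumes h: "homeomorphic_map (tau A) (tau B) h"
  obtains \<sigma> where "bij \<sigma>" "\<And>i. h ` block A i = block B (\<sigma> i)"
proof -
  have comps: "range (block B) = image h ` range (block A)"
    using homeomorphic_map_non_locally_compact_components[OF h]
    by (simp add: connected_components_non_locally_compact_tau)
  have "\<forall>i. \<exists>j. h ` block A i = block B j"
  proof
    fix i
    have "h ` block A i \<in> range (block B)"
      unfolding comps by blast
    then show "\<exists>j. h ` block A i = block B j"
      by blast
  qed
  then obtain \<sigma> where \<sigma>: "\<And>i. h ` block A i = block B (\<sigma> i)"
    by (metis choice)
  have "inj h"
    using homeomorphic_imp_injective_map[OF h] by simp
  have "inj \<sigma>"
  proof (rule injI)
    fix i i' assume "\<sigma> i = \<sigma> i'"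
    then have "h ` block A i = h ` block A i'"
      by (simp add: \<sigma>)
    then have "block A i = block A i'"
      by (simp add: inj_image_eq_iff[OF \<open>inj h\<close>])
    then show "i = i'"
      by (rule injD[OF inj_block])
  qed
  moreover have "\<exists>i. j = \<sigma> i" for j
  proof -
    have "block B j \<in> image h ` range (block A)"
      unfolding comps[symmetric] by blast
    then obtain i where "block B j = block B (\<sigma> i)"
      by (auto simp: \<sigma>)
    then show ?thesis
      using injD[OF inj_block] by blast
  qed
  ultimately have "bij \<sigma>"
    by (simp add: bij_def surj_def)
  with \<sigma> show ?thesis
    using that by blast
qed

lemma homeomorphic_map_tau_imp_eq:
  assumes h: "homeomorphic_map (tau A) (tau B) h"
  shows "A = B"
proof -
  obtain \<sigma> where "bij \<sigma>" and \<sigma>: "\<And>i. h ` block A i = block B (\<sigma> i)"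
    using homeomorphic_map_tau_permutes_blocks[OF h] by blast
  have "(\<sigma> j = Suc (\<sigma> i) \<or> \<sigma> i = Suc (\<sigma> j)) \<longleftrightarrow> (j = Suc i \<or> i = Suc j)" for i j
    using homeomorphic_map_adjacent_in_iff[OF h, of "block A i" "block A j"]
    by (simp add: \<sigma> adjacent_in_tau_iff)
  then have "\<sigma> i = i" for i
    using path_graph_automorphism_eq_id[OF \<open>bij \<sigma>\<close>] by blast
  then have "h ` block A i = block B i" for i
    by (simp add: \<sigma>)
  moreover have "inj_on h (block A i)" for i
    using homeomorphic_imp_injective_map[OF h] inj_on_subset by fastforce
  then have "finite (h ` block A i) \<longleftrightarrow> finite (block A i)" for i
    by (rule finite_image_iff)
  ultimately show ?thesis
    by (auto simp: finite_block_iff)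
qed

lemma homeomorphic_space_tau_iff: "tau A homeomorphic_space tau B \<longleftrightarrow> A = B"
proof
  assume "tau A homeomorphic_space tau B"
  then obtain h where "homeomorphic_map (tau A) (tau B) h"
    unfolding homeomorphic_space by blast
  then show "A = B"
    by (rule homeomorphic_map_tau_imp_eq)
qed simp

lemma inj_rational_cut: "inj (\<lambda>r::real. {n. from_nat_into \<rat> n < r})"
proof (rule linorder_injI)
  fix r r' :: real assume "r < r'"
  then obtain q where q: "q \<in> \<rat>" "r < q" "q < r'"
    using Rats_dense_in_real by blast
  have "(\<rat> :: real set) \<noteq> {}"
    using Rats_0 by blast
  then have "q \<in> range (from_nat_into \<rat>)"
    using q(1) range_from_nat_into[OF _ countable_rat] by blast
  then obtain n where "from_nat_into \<rat> n = q"
    by (metis rangeE)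
  then have "n \<in> {n. from_nat_into \<rat> n < r'}" "n \<notin> {n. from_nat_into \<rat> n < r}"
    using q by auto
  then show "{n. from_nat_into \<rat> n < r} \<noteq> {n. from_nat_into \<rat> n < r'}"
    by blast
qed

theorem theorem4:
  shows "\<exists>F. F \<subseteq> coarser_Hausdorff_topologies \<and>
             F \<approx> (UNIV :: real set) \<and>
             (\<forall>T\<in>F. completely_metrizable_space T) \<and>
             (\<forall>S\<in>F. \<forall>T\<in>F. S \<noteq> T \<longrightarrow> \<not> (S homeomorphic_space T))"
proof (intro exI conjI)
  define cut :: "real \<Rightarrow> nat set" where "cut r = {n. from_nat_into \<rat> n < r}" for r
  let ?F = "range (tau \<circ> cut)"
  have "inj tau"
    using homeomorphic_space_tau_iff by (metis homeomorphic_space_refl injI)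
  then have "bij_betw (tau \<circ> cut) UNIV ?F"
    using inj_rational_cut by (simp add: bij_betw_def cut_def[abs_def] inj_compose)
  then show "?F \<approx> (UNIV :: real set)"
    using eqpoll_def eqpoll_sym by blast
  show "?F \<subseteq> coarser_Hausdorff_topologies"
    using tau_in_coarser_Hausdorff_topologies by auto
  show "\<forall>T\<in>?F. completely_metrizable_space T"
    using completely_metrizable_space_tau by auto
  show "\<forall>S\<in>?F. \<forall>T\<in>?F. S \<noteq> T \<longrightarrow> \<not> S homeomorphic_space T"
    using homeomorphic_space_tau_iff by auto
qed

end
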